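(* Let $F_1,\dots,F_n:\mathbb{R}^d\to\mathbb{R}^d$, $F=\frac1n\sum_iF_i$, and let $x^*$ satisfy $F(x^* )=0$. Assume $F$ is $L$-Lipschitz and satisfies the weak Minty condition with parameter $0<\rho<\frac1{2L}$, and that the Expected Residual condition holds with parameter $\delta>0$ for $g=F_v$, $v\sim\mathcal D$; let $\sigma_*^2=\mathbb{E}\|F_v(x^* )\|^2<\infty$. Let $\gamma_k=\gamma$, $\omega_k=\omega$ with $$\max\Big\{2\rho,\frac1{2L}\Big\}<\gamma<\frac1L,\qquad 0<\omega<\min\Big\{\gamma-2\rho,\frac1{4L}-\frac\gamma4\Big\}.$$ Then for all $K\ge2$, the iterates of mini-batched SPEG with batch-size $$\tau\ge\max\Big\{1,\frac{32\delta}{(1-L\gamma)L^3\omega},\frac{48\omega\gamma\delta(K-1)}{(1-L\gamma)^2},\frac{2\omega\gamma\sigma_*^2(K-1)}{(1-L\gamma)\|x_0-x^*\|^2}\Big\}$$ satisfy $$\min_{0\le k\le K-1}\mathbb{E}\big[\|F(\hat x_k)\|^2\big]\le\frac{C\|x_0-x^*\|^2}{K-1},\qquad C=\frac{48}{\omega\gamma(1-L(\gamma+4\omega))}.$$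
   Context: $L$-Lipschitz: $\|F(x)-F(y)\|\le L\|x-y\|$. Weak Minty condition with parameter $\rho>0$: $\langle F(x),x-x^*\rangle\ge-\rho\|F(x)\|^2$ for all $x\in\mathbb{R}^d$. A sampling distribution $\mathcal D$ is a distribution of a random $v\in\mathbb{R}^n_+$ with $\mathbb{E}[v_i]=1$ for all $i$; $F_v(x):=\frac1n\sum_iv_iF_i(x)$. Expected Residual with parameter $\delta$: $\mathbb{E}\|(F_v(x)-F_v(x^* ))-(F(x)-F(x^* ))\|^2\le\frac\delta2\|x-x^*\|^2$ for all $x$. Mini-batched SPEG with batch-size $\tau$: given $x_0$, $\hat x_{-1}=x_0$, and for $k\ge0$: $\hat x_k=x_k-\gamma_k G_{k-1}(\hat x_{k-1})$, $x_{k+1}=x_k-\omega_kG_k(\hat x_k)$, where $G_k(y)=\frac1\tau\sum_{j=1}^\tau F_{v_{k,j}}(y)$ and all $v_{k,j}$ are i.i.d. samples from $\mathcal D$ (independent across $j$ and $k$). *)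

theory Defs
  imports "HOL-Probability.Probability"
begin

text \<open>Operators F_1..F_n are indexed by a finite type 'n; R^d is real^'d;
  a sampling vector v is an element of real^'n.\<close>

definition Fv :: "('n::finite \<Rightarrow> real^'d \<Rightarrow> real^'d) \<Rightarrow> real^'n \<Rightarrow> real^'d \<Rightarrow> real^'d" where
  "Fv Fs v y = (1 / real CARD('n)) *\<^sub>R (\<Sum>i\<in>UNIV. (v $ i) *\<^sub>R Fs i y)"

definition Fbar :: "('n::finite \<Rightarrow> real^'d \<Rightarrow> real^'d) \<Rightarrow> real^'d \<Rightarrow> real^'d" where
  "Fbar Fs y = (1 / real CARD('n)) *\<^sub>R (\<Sum>i\<in>UNIV. Fs i y)"

text \<open>Mini-batch estimator built from sample block m: samples s (m,j), j < tau.
  Block m = 0 plays the role of the paper's index k = -1, block m = k+1 of index k.\<close>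

definition minibatch :: "('n::finite \<Rightarrow> real^'d \<Rightarrow> real^'d) \<Rightarrow> nat \<Rightarrow> (nat \<times> nat \<Rightarrow> real^'n)
    \<Rightarrow> nat \<Rightarrow> real^'d \<Rightarrow> real^'d" where
  "minibatch Fs tau s m y = (1 / real tau) *\<^sub>R (\<Sum>j<tau. Fv Fs (s (m, j)) y)"

text \<open>speg ... k = (x_k, xhat_k) for mini-batched SPEG with constant step sizes.\<close>

fun speg :: "('n::finite \<Rightarrow> real^'d \<Rightarrow> real^'d) \<Rightarrow> nat \<Rightarrow> real \<Rightarrow> real \<Rightarrow> real^'d
    \<Rightarrow> (nat \<times> nat \<Rightarrow> real^'n) \<Rightarrow> nat \<Rightarrow> (real^'d) \<times> (real^'d)" where
  "speg Fs tau gam om x0 s 0 = (x0, x0 - gam *\<^sub>R minibatch Fs tau s 0 x0)"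
| "speg Fs tau gam om x0 s (Suc k) =
     (let (x, xh) = speg Fs tau gam om x0 s k;
          g = minibatch Fs tau s (Suc k) xh;
          x' = x - om *\<^sub>R g
      in (x', x' - gam *\<^sub>R g))"

end

(* Follow the Lyapunov function Phi (x, xh) = ||x - x*||^2 + A ||F xh - g||^2, where
   g = (x - xh) / gamma is the last oracle output. The weak Minty condition at xh, the
   Lipschitz continuity of F and Young's inequality give, conditionally on the past,
     E Phi' <= (1 + eps) Phi + eta - zeta ||F xh||^2,
   where the noise only enters through the variance of the mini-batch estimator, which is at
   most (delta ||xh - x*||^2 + 2 sigma^2) / tau by the expected residual condition. The batch
   size makes eps (K - 1) and eta (K - 1) small, so an a priori bound B on E Phi turns the
   recursion into zeta * sum_{k < K - 1} E ||F xh_k||^2 <= B = O(||x0 - x*||^2), and the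
   minimum is at most the average. *)

theory Submission
  imports Defs
begin

lemma power2_norm_add_le_weighted:
  fixes x y :: "'a::real_normed_vector"
  assumes "0 < t" "t < 1"
  shows "(norm (x + y))\<^sup>2 \<le> (norm x)\<^sup>2 / t + (norm y)\<^sup>2 / (1 - t)"
proof -
  have "0 \<le> (norm x * (1 - t) - norm y * t)\<^sup>2" by simp
  hence "(norm x + norm y)\<^sup>2 * (t * (1 - t)) \<le> (norm x)\<^sup>2 * (1 - t) + (norm y)\<^sup>2 * t"
    by (simp add: power2_eq_square algebra_simps)
  hence "(norm x + norm y)\<^sup>2 \<le> (norm x)\<^sup>2 / t + (norm y)\<^sup>2 / (1 - t)"
    using assms by (simp add: field_simps)
  moreover have "(norm (x + y))\<^sup>2 \<le> (norm x + norm y)\<^sup>2"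
    by (simp add: norm_triangle_ineq power_mono)
  ultimately show ?thesis by linarith
qed

lemma power2_norm_add_le:
  fixes x y :: "'a::real_normed_vector"
  shows "(norm (x + y))\<^sup>2 \<le> 2 * (norm x)\<^sup>2 + 2 * (norm y)\<^sup>2"
  using power2_norm_add_le_weighted[of "1/2" x y] by simp

(* The extragradient step x - omega a from x = xh + gamma p, with z = xh - x*, a = F xh and
   inner a z >= - rho ||a||^2 the weak Minty condition at xh. *)
lemma power2_norm_minty_step_le:
  fixes a z p :: "'a::real_inner"
  assumes minty: "inner a z \<ge> - \<rho> * (norm a)\<^sup>2" and "0 \<le> \<omega>" "\<omega> \<le> \<gamma> - 2 * \<rho>"
  shows "(norm (z + \<gamma> *\<^sub>R p - \<omega> *\<^sub>R a))\<^sup>2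
       \<le> (norm (z + \<gamma> *\<^sub>R p))\<^sup>2 - \<omega> * \<gamma> * (norm p)\<^sup>2 + \<omega> * \<gamma> * (norm (a - p))\<^sup>2"
proof -
  have expand: "(norm (z + \<gamma> *\<^sub>R p - \<omega> *\<^sub>R a))\<^sup>2
      = (norm (z + \<gamma> *\<^sub>R p))\<^sup>2 - 2 * \<omega> * inner a z - 2 * (\<omega> * \<gamma>) * inner a p + \<omega>\<^sup>2 * (norm a)\<^sup>2"
    unfolding power2_norm_eq_inner
    by (simp add: inner_add_left inner_add_right inner_diff_left inner_diff_right inner_commute
        power2_eq_square algebra_simps)
  have norm_diff: "(norm (a - p))\<^sup>2 = (norm a)\<^sup>2 - 2 * inner a p + (norm p)\<^sup>2"
    unfolding power2_norm_eq_inner by (simp add: inner_diff_left inner_diff_right inner_commute)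
  have cross: "- 2 * (\<omega> * \<gamma>) * inner a p
      = \<omega> * \<gamma> * (norm (a - p))\<^sup>2 - \<omega> * \<gamma> * (norm a)\<^sup>2 - \<omega> * \<gamma> * (norm p)\<^sup>2"
    unfolding norm_diff by (simp add: algebra_simps)
  have "- 2 * \<omega> * inner a z \<le> 2 * \<omega> * \<rho> * (norm a)\<^sup>2"
    using mult_left_mono[OF minty, of "2 * \<omega>"] assms(2) by simp
  moreover have "0 \<le> \<omega> * (\<gamma> - 2 * \<rho> - \<omega>) * (norm a)\<^sup>2"
    using assms(2,3) by simp
  hence "2 * \<omega> * \<rho> * (norm a)\<^sup>2 + \<omega>\<^sup>2 * (norm a)\<^sup>2 \<le> \<omega> * \<gamma> * (norm a)\<^sup>2"
    by (simp add: power2_eq_square algebra_simps)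
  ultimately show ?thesis unfolding expand using cross by linarith
qed

lemma (in prob_space) nn_integral_power2_norm_add_centered:
  fixes e :: "'a \<Rightarrow> 'b::euclidean_space"
  assumes e: "e \<in> borel_measurable M"
    and second_moment: "(\<integral>\<^sup>+w. ennreal ((norm (e w))\<^sup>2) \<partial>M) = ennreal V" and "0 \<le> V"
    and centered_integrable: "\<And>c. integrable M (\<lambda>w. inner c (e w))"
    and centered: "\<And>c. (\<integral>w. inner c (e w) \<partial>M) = 0"
  shows "(\<integral>\<^sup>+w. ennreal ((norm (c + k *\<^sub>R e w))\<^sup>2) \<partial>M) = ennreal ((norm c)\<^sup>2 + k\<^sup>2 * V)"
proof -
  have square_integrable: "integrable M (\<lambda>w. (norm (e w))\<^sup>2)"
    by (rule integrableI_nn_integral_finite[OF _ _ second_moment]) (use e in auto)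
  have "ennreal (\<integral>w. (norm (e w))\<^sup>2 \<partial>M) = ennreal V"
    using nn_integral_eq_integral[OF square_integrable] second_moment by simp
  hence variance: "(\<integral>w. (norm (e w))\<^sup>2 \<partial>M) = V"
    using \<open>0 \<le> V\<close> by (simp add: ennreal_inj)
  have expand: "(norm (c + k *\<^sub>R e w))\<^sup>2
      = (norm c)\<^sup>2 + 2 * k * inner c (e w) + k\<^sup>2 * (norm (e w))\<^sup>2" for w
    unfolding power2_norm_eq_inner
    by (simp add: inner_add_left inner_add_right inner_commute power2_eq_square algebra_simps)
  have "integrable M (\<lambda>w. (norm (c + k *\<^sub>R e w))\<^sup>2)"
    unfolding expand using centered_integrable[of c] square_integrable by auto
  hence "(\<integral>\<^sup>+w. ennreal ((norm (c + k *\<^sub>R e w))\<^sup>2) \<partial>M)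
      = ennreal (\<integral>w. (norm (c + k *\<^sub>R e w))\<^sup>2 \<partial>M)"
    by (rule nn_integral_eq_integral) simp
  also have "\<dots> = ennreal (\<integral>w. (norm c)\<^sup>2 + 2 * k * inner c (e w) + k\<^sup>2 * (norm (e w))\<^sup>2 \<partial>M)"
    by (simp only: expand)
  also have "\<dots> = ennreal ((norm c)\<^sup>2 + k\<^sup>2 * V)"
    using centered[of c] centered_integrable[of c] square_integrable variance by (simp add: prob_space)
  finally show ?thesis .
qed

lemma (in prob_space) nn_integral_PiM_power2_norm_add_sum:
  fixes e :: "'a \<Rightarrow> 'b::euclidean_space"
  assumes e: "e \<in> borel_measurable M"
    and second_moment: "(\<integral>\<^sup>+w. ennreal ((norm (e w))\<^sup>2) \<partial>M) = ennreal V" and "0 \<le> V"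
    and centered_integrable: "\<And>c. integrable M (\<lambda>w. inner c (e w))"
    and centered: "\<And>c. (\<integral>w. inner c (e w) \<partial>M) = 0"
    and "finite J"
  shows "(\<integral>\<^sup>+w. ennreal ((norm (c + k *\<^sub>R (\<Sum>i\<in>J. e (w i))))\<^sup>2) \<partial>PiM J (\<lambda>_. M))
       = ennreal ((norm c)\<^sup>2 + k\<^sup>2 * real (card J) * V)"
  using \<open>finite J\<close>
proof (induction J arbitrary: c rule: finite_induct)
  case empty
  interpret P: prob_space "PiM {} (\<lambda>_. M)"
    by (rule prob_space_PiM) (rule prob_space_axioms)
  show ?case by (simp add: P.emeasure_space_1)
next
  case (insert i J)
  interpret PJ: prob_space "PiM J (\<lambda>_. M)"
    by (rule prob_space_PiM) (rule prob_space_axioms)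
  interpret PP: product_prob_space "\<lambda>_. M" UNIV by unfold_locales
  have sum_measurable: "(\<lambda>w. \<Sum>j\<in>I. e (w j)) \<in> borel_measurable (PiM I (\<lambda>_. M))" for I
    by (intro borel_measurable_sum measurable_compose[OF measurable_component_singleton[where M="\<lambda>_. M"] e])
  have split: "c + k *\<^sub>R (\<Sum>j\<in>insert i J. e ((x(i := v)) j))
      = (c + k *\<^sub>R (\<Sum>j\<in>J. e (x j))) + k *\<^sub>R e v" for x v
  proof -
    have "(\<Sum>j\<in>J. e ((x(i := v)) j)) = (\<Sum>j\<in>J. e (x j))"
      using insert.hyps(2) by (intro sum.cong) auto
    thus ?thesis using insert.hyps by (simp add: scaleR_add_right algebra_simps)
  qed
  have "(\<integral>\<^sup>+w. ennreal ((norm (c + k *\<^sub>R (\<Sum>j\<in>insert i J. e (w j))))\<^sup>2) \<partial>PiM (insert i J) (\<lambda>_. M))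
     = (\<integral>\<^sup>+x. (\<integral>\<^sup>+v. ennreal ((norm (c + k *\<^sub>R (\<Sum>j\<in>insert i J. e ((x(i := v)) j))))\<^sup>2) \<partial>M)
          \<partial>PiM J (\<lambda>_. M))"
    by (intro PP.product_nn_integral_insert insert.hyps measurable_compose[OF sum_measurable]) simp
  also have "\<dots> = (\<integral>\<^sup>+x. ennreal ((norm (c + k *\<^sub>R (\<Sum>j\<in>J. e (x j))))\<^sup>2) + ennreal (k\<^sup>2 * V)
          \<partial>PiM J (\<lambda>_. M))"
    unfolding split
    by (simp only: nn_integral_power2_norm_add_centered[OF e second_moment \<open>0 \<le> V\<close>
          centered_integrable centered] ennreal_plus zero_le_power2 mult_nonneg_nonneg \<open>0 \<le> V\<close>)
  also have "\<dots> = ennreal ((norm c)\<^sup>2 + k\<^sup>2 * real (card J) * V) + ennreal (k\<^sup>2 * V)"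
    by (subst nn_integral_add) (auto intro: measurable_compose[OF sum_measurable]
        simp: insert.IH PJ.emeasure_space_1)
  also have "\<dots> = ennreal ((norm c)\<^sup>2 + k\<^sup>2 * real (card (insert i J)) * V)"
    using insert.hyps \<open>0 \<le> V\<close> by (simp add: ennreal_plus[symmetric] algebra_simps del: ennreal_plus)
  finally show ?case .
qed

(* The a priori bound B on P k turns the multiplicative perturbation eps * P k into the
   additive one eps * B. *)
lemma ennreal_perturbed_descent_sum_le:
  fixes P a :: "nat \<Rightarrow> ennreal"
  assumes step: "\<And>k. k < n \<Longrightarrow> P (Suc k) + ennreal c * a k \<le> ennreal (1 + \<epsilon>) * P k + ennreal \<eta>"
    and init: "P 0 \<le> ennreal P0"
    and "0 \<le> \<epsilon>" "0 \<le> \<eta>" "0 \<le> P0" "0 \<le> B"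
    and budget: "P0 + real n * (\<epsilon> * B + \<eta>) \<le> B"
  shows "ennreal c * (\<Sum>j<n. a j) \<le> ennreal B"
proof -
  have "P k + ennreal c * (\<Sum>j<k. a j) \<le> ennreal (P0 + real k * (\<epsilon> * B + \<eta>))" if "k \<le> n" for k
    using that
  proof (induction k)
    case 0
    thus ?case using init by simp
  next
    case (Suc k)
    define S where "S = P0 + real k * (\<epsilon> * B + \<eta>)"
    have "0 \<le> \<epsilon> * B + \<eta>" using assms(3,4,6) by simp
    hence "0 \<le> S" "S \<le> B"
      using Suc.prems budget mult_right_mono[of "real k" "real n" "\<epsilon> * B + \<eta>"] assms(5)
      unfolding S_def by auto
    have IH: "P k + ennreal c * (\<Sum>j<k. a j) \<le> ennreal S"
      using Suc unfolding S_def by simp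
    have "P k \<le> P k + ennreal c * (\<Sum>j<k. a j)"
      by (rule add_increasing2) simp_all
    also note IH
    also have "ennreal S \<le> ennreal B"
      using \<open>S \<le> B\<close> by (rule ennreal_leI)
    finally have "P k \<le> ennreal B" .
    have "P (Suc k) + ennreal c * (\<Sum>j<Suc k. a j) = (P (Suc k) + ennreal c * a k) + ennreal c * (\<Sum>j<k. a j)"
      by (simp add: distrib_left add_ac)
    also have "\<dots> \<le> (ennreal (1 + \<epsilon>) * P k + ennreal \<eta>) + ennreal c * (\<Sum>j<k. a j)"
      using Suc.prems by (intro add_right_mono step) simp
    also have "\<dots> = (P k + ennreal c * (\<Sum>j<k. a j)) + ennreal \<epsilon> * P k + ennreal \<eta>"
      using assms(3) by (simp add: ennreal_plus distrib_right add_ac)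
    also have "\<dots> \<le> ennreal S + ennreal \<epsilon> * ennreal B + ennreal \<eta>"
      using IH \<open>P k \<le> ennreal B\<close> by (intro add_mono mult_left_mono order_refl) auto
    also have "\<dots> = ennreal (S + \<epsilon> * B + \<eta>)"
      using \<open>0 \<le> S\<close> assms(3,4,6) by (simp add: ennreal_mult)
    also have "S + \<epsilon> * B + \<eta> = P0 + real (Suc k) * (\<epsilon> * B + \<eta>)"
      unfolding S_def by (simp add: algebra_simps)
    finally show ?case .
  qed
  from this[OF order_refl] have "ennreal c * (\<Sum>j<n. a j) \<le> ennreal (P0 + real n * (\<epsilon> * B + \<eta>))"
    by (rule order_trans[rotated]) (rule add_increasing; simp)
  also have "\<dots> \<le> ennreal B"
    using budget by (rule ennreal_leI)
  finally show ?thesis .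
qed

lemma Min_image_le_of_sum_le:
  fixes a :: "nat \<Rightarrow> ennreal"
  assumes sum: "ennreal c * (\<Sum>j<n. a j) \<le> ennreal B" and "0 < c" "0 < n" "0 \<le> B"
  shows "Min (a ` {..n}) \<le> ennreal (B / (c * n))"
proof -
  define M where "M = Min (a ` {..n})"
  have "of_nat n * M = (\<Sum>j<n. M)" by simp
  also have "\<dots> \<le> (\<Sum>j<n. a j)"
    unfolding M_def by (intro sum_mono Min_le) auto
  finally have "ennreal c * (of_nat n * M) \<le> ennreal B"
    using sum by (meson mult_left_mono order_trans zero_le)
  moreover have "M \<noteq> \<top>"
    using calculation assms(2,3) by (auto simp: ennreal_mult_eq_top_iff top_unique)
  then obtain m where m: "M = ennreal m" "0 \<le> m"
    by (cases M) auto
  ultimately have "ennreal (c * (n * m)) \<le> ennreal B"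
    using assms(2) by (simp add: ennreal_mult ennreal_of_nat_eq_real_of_nat)
  hence "c * n * m \<le> B"
    using assms(2,4) m(2) by (simp add: mult.assoc)
  hence "m \<le> B / (c * n)"
    using assms(2,3) by (simp add: pos_le_divide_eq mult.commute mult.left_commute)
  thus ?thesis unfolding M_def[symmetric] m(1) by (rule ennreal_leI)
qed

definition speg_step :: "real \<Rightarrow> real \<Rightarrow> (real^'d) \<times> (real^'d) \<Rightarrow> real^'d \<Rightarrow> (real^'d) \<times> (real^'d)" where
  "speg_step \<gamma> \<omega> st g = (fst st - \<omega> *\<^sub>R g, fst st - \<omega> *\<^sub>R g - \<gamma> *\<^sub>R g)"

lemma speg_Suc_step:
  "speg Fs \<tau> \<gamma> \<omega> x0 s (Suc k)
     = speg_step \<gamma> \<omega> (speg Fs \<tau> \<gamma> \<omega> x0 s k) (minibatch Fs \<tau> s (Suc k) (snd (speg Fs \<tau> \<gamma> \<omega> x0 s k)))"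
  by (simp add: speg_step_def Let_def split: prod.split)

definition speg_samples :: "nat \<Rightarrow> nat \<Rightarrow> (nat \<times> nat) set" where
  "speg_samples \<tau> k = {..k} \<times> {..<\<tau>}"

lemma finite_speg_samples: "finite (speg_samples \<tau> k)"
  unfolding speg_samples_def by auto

lemma speg_samples_0: "speg_samples \<tau> 0 = Pair 0 ` {..<\<tau>}"
  unfolding speg_samples_def by auto

lemma speg_samples_Suc: "speg_samples \<tau> (Suc k) = speg_samples \<tau> k \<union> Pair (Suc k) ` {..<\<tau>}"
  unfolding speg_samples_def by auto

lemma speg_samples_disjoint: "speg_samples \<tau> k \<inter> Pair (Suc k) ` {..<\<tau>} = {}"
  unfolding speg_samples_def by auto

lemma minibatch_cong:
  "(\<And>j. j < \<tau> \<Longrightarrow> s (m, j) = s' (m, j)) \<Longrightarrow> minibatch Fs \<tau> s m y = minibatch Fs \<tau> s' m y"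
  unfolding minibatch_def by (auto intro!: sum.cong arg_cong[where f="\<lambda>z. _ *\<^sub>R z"])

lemma speg_cong:
  "(\<And>i. i \<in> speg_samples \<tau> k \<Longrightarrow> s i = s' i) \<Longrightarrow> speg Fs \<tau> \<gamma> \<omega> x0 s k = speg Fs \<tau> \<gamma> \<omega> x0 s' k"
proof (induction k)
  case 0
  have "minibatch Fs \<tau> s 0 x0 = minibatch Fs \<tau> s' 0 x0"
    using 0 by (intro minibatch_cong) (auto simp: speg_samples_def)
  then show ?case by simp
next
  case (Suc k)
  have "speg Fs \<tau> \<gamma> \<omega> x0 s k = speg Fs \<tau> \<gamma> \<omega> x0 s' k"
    using Suc by (auto simp: speg_samples_def)
  moreover have "minibatch Fs \<tau> s (Suc k) y = minibatch Fs \<tau> s' (Suc k) y" for y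
    using Suc.prems by (intro minibatch_cong) (auto simp: speg_samples_def)
  ultimately show ?case by (simp add: speg_Suc_step)
qed

locale unbiased_sampling =
  fixes Fs :: "'n::finite \<Rightarrow> real^'d \<Rightarrow> real^'d" and D :: "(real^'n) measure"
  assumes Fs_measurable: "\<And>i. Fs i \<in> borel_measurable borel"
    and prob_space_D: "prob_space D" and sets_D: "sets D = sets borel"
    and integrable_sample: "\<And>i. integrable D (\<lambda>v. v $ i)"
    and sample_mean: "\<And>i. (\<integral>v. v $ i \<partial>D) = 1"
begin

abbreviation samples :: "(nat \<times> nat) set \<Rightarrow> (nat \<times> nat \<Rightarrow> real^'n) measure" where
  "samples I \<equiv> PiM I (\<lambda>_. D)"

lemma prob_space_samples: "prob_space (samples I)"
  using prob_space_D by (intro prob_space_PiM)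

lemma borel_measurable_Fv:
  assumes f: "f \<in> borel_measurable M" and h: "h \<in> borel_measurable M"
  shows "(\<lambda>w. Fv Fs (f w) (h w)) \<in> borel_measurable M"
proof -
  have "(\<lambda>v::real^'n. v $ i) \<in> borel_measurable borel" for i
    by (intro borel_measurable_continuous_onI continuous_intros)
  hence "(\<lambda>w. f w $ i) \<in> borel_measurable M" for i
    using measurable_compose[OF f] by blast
  moreover have "(\<lambda>w. Fs i (h w)) \<in> borel_measurable M" for i
    using measurable_compose[OF h Fs_measurable] .
  ultimately show ?thesis unfolding Fv_def
    by (intro borel_measurable_scaleR borel_measurable_sum borel_measurable_const)
qed

lemma borel_measurable_Fv_sample: "(\<lambda>v. Fv Fs v y) \<in> borel_measurable D"
  by (rule borel_measurable_Fv) (auto simp: measurable_cong_sets[OF sets_D refl])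

lemma borel_measurable_Fbar: "Fbar Fs \<in> borel_measurable borel"
  unfolding Fbar_def using Fs_measurable
  by (intro borel_measurable_scaleR borel_measurable_const borel_measurable_sum)

lemma borel_measurable_sample: "j \<in> I \<Longrightarrow> (\<lambda>s. s j) \<in> borel_measurable (samples I)"
  using measurable_component_singleton[of j I "\<lambda>_. D"]
  by (simp add: measurable_cong_sets[OF refl sets_D])

lemma Fv_minus_Fbar:
  "Fv Fs v y - Fbar Fs y = (1 / real CARD('n)) *\<^sub>R (\<Sum>i\<in>UNIV. (v $ i - 1) *\<^sub>R Fs i y)"
  unfolding Fv_def Fbar_def
  by (simp add: scaleR_diff_right[symmetric] sum_subtractf[symmetric] scaleR_left_diff_distrib)

lemma inner_Fv_minus_Fbar:
  "inner c (Fv Fs v y - Fbar Fs y) = (1 / real CARD('n)) * (\<Sum>i\<in>UNIV. (v $ i - 1) * inner c (Fs i y))"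
  unfolding Fv_minus_Fbar by (simp add: inner_sum_right)

lemma integrable_inner_Fv_minus_Fbar: "integrable D (\<lambda>v. inner c (Fv Fs v y - Fbar Fs y))"
proof -
  interpret prob_space D by (rule prob_space_D)
  show ?thesis unfolding inner_Fv_minus_Fbar using integrable_sample by auto
qed

lemma integral_inner_Fv_minus_Fbar: "(\<integral>v. inner c (Fv Fs v y - Fbar Fs y) \<partial>D) = 0"
proof -
  interpret prob_space D by (rule prob_space_D)
  show ?thesis
    unfolding inner_Fv_minus_Fbar using integrable_sample sample_mean by (simp add: prob_space)
qed

lemma borel_measurable_minibatch:
  assumes "Pair m ` {..<\<tau>} \<subseteq> I" and h: "h \<in> borel_measurable (samples I)"
  shows "(\<lambda>s. minibatch Fs \<tau> s m (h s)) \<in> borel_measurable (samples I)"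
proof -
  have "(\<lambda>s. Fv Fs (s (m, j)) (h s)) \<in> borel_measurable (samples I)" if "j < \<tau>" for j
    using assms that by (intro borel_measurable_Fv[OF borel_measurable_sample h]) auto
  thus ?thesis unfolding minibatch_def
    by (intro borel_measurable_scaleR borel_measurable_const borel_measurable_sum) auto
qed

lemma borel_measurable_speg:
  "speg_samples \<tau> k \<subseteq> I \<Longrightarrow> (\<lambda>s. speg Fs \<tau> \<gamma> \<omega> x0 s k) \<in> borel_measurable (samples I)"
proof (induction k)
  case 0
  hence "(\<lambda>s. minibatch Fs \<tau> s 0 x0) \<in> borel_measurable (samples I)"
    by (intro borel_measurable_minibatch) (auto simp: speg_samples_0)
  thus ?case by (simp add: borel_prod[symmetric])
next
  case (Suc k)
  hence "(\<lambda>s. speg Fs \<tau> \<gamma> \<omega> x0 s k) \<in> samples I \<rightarrow>\<^sub>M borel \<Otimes>\<^sub>M borel"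
    by (simp add: speg_samples_Suc borel_prod)
  moreover have "(\<lambda>s. minibatch Fs \<tau> s (Suc k) (snd (speg Fs \<tau> \<gamma> \<omega> x0 s k))) \<in> borel_measurable (samples I)"
    using Suc.prems calculation by (intro borel_measurable_minibatch) (auto simp: speg_samples_Suc)
  ultimately show ?case
    unfolding speg_Suc_step speg_step_def borel_prod[symmetric] by measurable
qed

lemma nn_integral_speg:
  assumes "\<Psi> \<in> borel_measurable borel"
  shows "(\<integral>\<^sup>+s. \<Psi> (speg Fs \<tau> \<gamma> \<omega> x0 s k) \<partial>samples UNIV)
       = (\<integral>\<^sup>+s. \<Psi> (speg Fs \<tau> \<gamma> \<omega> x0 s k) \<partial>samples (speg_samples \<tau> k))"
proof -
  interpret D: prob_space D by (rule prob_space_D)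
  interpret product_prob_space "\<lambda>_. D" UNIV by unfold_locales
  have "(\<integral>\<^sup>+s. \<Psi> (speg Fs \<tau> \<gamma> \<omega> x0 s k) \<partial>samples (speg_samples \<tau> k))
      = (\<integral>\<^sup>+s. \<Psi> (speg Fs \<tau> \<gamma> \<omega> x0 s k) \<partial>distr (samples UNIV) (samples (speg_samples \<tau> k))
            (\<lambda>s. restrict s (speg_samples \<tau> k)))"
    by (simp add: distr_PiM_restrict_finite finite_speg_samples)
  also have "\<dots> = (\<integral>\<^sup>+s. \<Psi> (speg Fs \<tau> \<gamma> \<omega> x0 (restrict s (speg_samples \<tau> k)) k) \<partial>samples UNIV)"
    using measurable_compose[OF borel_measurable_speg[OF order_refl] assms]
    by (intro nn_integral_distr measurable_restrict_subset) auto
  also have "\<dots> = (\<integral>\<^sup>+s. \<Psi> (speg Fs \<tau> \<gamma> \<omega> x0 s k) \<partial>samples UNIV)"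
  proof -
    have "speg Fs \<tau> \<gamma> \<omega> x0 (restrict s (speg_samples \<tau> k)) k = speg Fs \<tau> \<gamma> \<omega> x0 s k" for s
      by (rule speg_cong) simp
    thus ?thesis by simp
  qed
  finally show ?thesis ..
qed

(* The block of samples used by step k + 1 is independent of the blocks that determine the
   k-th iterate, so it can be integrated out first. *)
lemma nn_integral_speg_Suc_le:
  assumes \<Psi>: "\<Psi> \<in> borel_measurable borel" and B: "B \<in> borel_measurable borel"
    and step: "\<And>st. (\<integral>\<^sup>+w. \<Psi> (speg_step \<gamma> \<omega> st (minibatch Fs \<tau> w (Suc k) (snd st)))
                      \<partial>samples (Pair (Suc k) ` {..<\<tau>})) \<le> B st"
  shows "(\<integral>\<^sup>+s. \<Psi> (speg Fs \<tau> \<gamma> \<omega> x0 s (Suc k)) \<partial>samples UNIV)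
       \<le> (\<integral>\<^sup>+s. B (speg Fs \<tau> \<gamma> \<omega> x0 s k) \<partial>samples UNIV)"
proof -
  interpret D: prob_space D by (rule prob_space_D)
  interpret product_prob_space "\<lambda>_. D" UNIV by unfold_locales
  let ?J = "speg_samples \<tau> k" and ?Q = "Pair (Suc k) ` {..<\<tau>}"
  let ?x = "\<lambda>s. speg Fs \<tau> \<gamma> \<omega> x0 s"
  have merge: "?x (merge ?J ?Q (s, w)) (Suc k)
      = speg_step \<gamma> \<omega> (?x s k) (minibatch Fs \<tau> w (Suc k) (snd (?x s k)))" for s w
  proof -
    have "?x (merge ?J ?Q (s, w)) k = ?x s k"
      by (rule speg_cong) (simp add: merge_def)
    moreover have "minibatch Fs \<tau> (merge ?J ?Q (s, w)) (Suc k) y = minibatch Fs \<tau> w (Suc k) y" for y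
      by (rule minibatch_cong) (auto simp: merge_def speg_samples_def)
    ultimately show ?thesis by (simp only: speg_Suc_step)
  qed
  have "(\<integral>\<^sup>+s. \<Psi> (?x s (Suc k)) \<partial>samples UNIV) = (\<integral>\<^sup>+s. \<Psi> (?x s (Suc k)) \<partial>samples (?J \<union> ?Q))"
    unfolding speg_samples_Suc[symmetric] by (rule nn_integral_speg[OF \<Psi>])
  also have "\<dots> = (\<integral>\<^sup>+s. (\<integral>\<^sup>+w. \<Psi> (?x (merge ?J ?Q (s, w)) (Suc k)) \<partial>samples ?Q) \<partial>samples ?J)"
    using measurable_compose[OF borel_measurable_speg[of \<tau> "Suc k", OF order_refl] \<Psi>]
    by (intro product_nn_integral_fold speg_samples_disjoint finite_speg_samples)
      (auto simp: speg_samples_Suc)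
  also have "\<dots> \<le> (\<integral>\<^sup>+s. B (?x s k) \<partial>samples ?J)"
    unfolding merge by (intro nn_integral_mono step)
  also have "\<dots> = (\<integral>\<^sup>+s. B (?x s k) \<partial>samples UNIV)"
    using nn_integral_speg[OF B] by simp
  finally show ?thesis .
qed

end

locale expected_residual = unbiased_sampling Fs D
  for Fs :: "'n::finite \<Rightarrow> real^'d \<Rightarrow> real^'d" and D +
  fixes xstar :: "real^'d" and \<delta> :: real
  assumes root: "Fbar Fs xstar = 0"
    and expected_residual: "\<And>x. (\<integral>\<^sup>+v. ennreal ((norm ((Fv Fs v x - Fv Fs v xstar)
                 - (Fbar Fs x - Fbar Fs xstar)))\<^sup>2) \<partial>D) \<le> ennreal (\<delta> / 2 * (norm (x - xstar))\<^sup>2)"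
    and integrable_noise_at_root: "integrable D (\<lambda>v. (norm (Fv Fs v xstar))\<^sup>2)"
    and delta_nonneg: "0 \<le> \<delta>"
begin

definition \<sigma>2 :: real where
  "\<sigma>2 = (\<integral>v. (norm (Fv Fs v xstar))\<^sup>2 \<partial>D)"

lemma \<sigma>2_nonneg: "0 \<le> \<sigma>2"
  unfolding \<sigma>2_def by simp

lemma nn_integral_oracle_noise_le:
  "(\<integral>\<^sup>+v. ennreal ((norm (Fv Fs v y - Fbar Fs y))\<^sup>2) \<partial>D) \<le> ennreal (\<delta> * (norm (y - xstar))\<^sup>2 + 2 * \<sigma>2)"
proof -
  let ?r = "\<lambda>v. (Fv Fs v y - Fv Fs v xstar) - (Fbar Fs y - Fbar Fs xstar)"
  have "ennreal ((norm (Fv Fs v y - Fbar Fs y))\<^sup>2)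
      \<le> 2 * ennreal ((norm (?r v))\<^sup>2) + 2 * ennreal ((norm (Fv Fs v xstar))\<^sup>2)" for v
  proof -
    have "(norm (Fv Fs v y - Fbar Fs y))\<^sup>2 \<le> 2 * (norm (?r v))\<^sup>2 + 2 * (norm (Fv Fs v xstar))\<^sup>2"
      using power2_norm_add_le[of "?r v" "Fv Fs v xstar"] root by simp
    hence "ennreal ((norm (Fv Fs v y - Fbar Fs y))\<^sup>2)
        \<le> ennreal (2 * (norm (?r v))\<^sup>2 + 2 * (norm (Fv Fs v xstar))\<^sup>2)"
      by (rule ennreal_leI)
    thus ?thesis by (simp add: ennreal_plus ennreal_mult)
  qed
  hence "(\<integral>\<^sup>+v. ennreal ((norm (Fv Fs v y - Fbar Fs y))\<^sup>2) \<partial>D)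
      \<le> (\<integral>\<^sup>+v. 2 * ennreal ((norm (?r v))\<^sup>2) + 2 * ennreal ((norm (Fv Fs v xstar))\<^sup>2) \<partial>D)"
    by (intro nn_integral_mono)
  also have "\<dots> = 2 * (\<integral>\<^sup>+v. ennreal ((norm (?r v))\<^sup>2) \<partial>D)
      + 2 * (\<integral>\<^sup>+v. ennreal ((norm (Fv Fs v xstar))\<^sup>2) \<partial>D)"
    using borel_measurable_Fv_sample by (subst nn_integral_add; simp add: nn_integral_cmult)
  also have "\<dots> \<le> 2 * ennreal (\<delta> / 2 * (norm (y - xstar))\<^sup>2) + 2 * ennreal \<sigma>2"
    unfolding \<sigma>2_def
    using expected_residual nn_integral_eq_integral[OF integrable_noise_at_root]
    by (intro add_mono mult_left_mono) auto
  also have "\<dots> = ennreal (2 * (\<delta> / 2 * (norm (y - xstar))\<^sup>2)) + ennreal (2 * \<sigma>2)"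
  proof -
    have "2 * ennreal x = ennreal (2 * x)" if "0 \<le> x" for x :: real
      using that by (simp add: ennreal_mult)
    thus ?thesis using delta_nonneg \<sigma>2_nonneg by simp
  qed
  also have "\<dots> = ennreal (\<delta> * (norm (y - xstar))\<^sup>2 + 2 * \<sigma>2)"
    using delta_nonneg \<sigma>2_nonneg by (simp add: ennreal_plus)
  finally show ?thesis .
qed

definition oracle_variance :: "real^'d \<Rightarrow> real" where
  "oracle_variance y = enn2real (\<integral>\<^sup>+v. ennreal ((norm (Fv Fs v y - Fbar Fs y))\<^sup>2) \<partial>D)"

lemma nn_integral_oracle_noise: "(\<integral>\<^sup>+v. ennreal ((norm (Fv Fs v y - Fbar Fs y))\<^sup>2) \<partial>D) = ennreal (oracle_variance y)"
proof -
  have "(\<integral>\<^sup>+v. ennreal ((norm (Fv Fs v y - Fbar Fs y))\<^sup>2) \<partial>D) \<noteq> \<top>"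
    using nn_integral_oracle_noise_le[of y] by (metis ennreal_neq_top neq_top_trans)
  thus ?thesis unfolding oracle_variance_def by (simp add: ennreal_enn2real_if)
qed

lemma oracle_variance_nonneg: "0 \<le> oracle_variance y"
  unfolding oracle_variance_def by simp

lemma oracle_variance_le: "oracle_variance y \<le> \<delta> * (norm (y - xstar))\<^sup>2 + 2 * \<sigma>2"
  using nn_integral_oracle_noise_le[of y] delta_nonneg \<sigma>2_nonneg
  unfolding nn_integral_oracle_noise by (subst (asm) ennreal_le_iff) auto

lemma nn_integral_minibatch:
  assumes "0 < \<tau>"
  shows "(\<integral>\<^sup>+w. ennreal ((norm (c + k *\<^sub>R (minibatch Fs \<tau> w m y - Fbar Fs y)))\<^sup>2) \<partial>samples (Pair m ` {..<\<tau>}))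
       = ennreal ((norm c)\<^sup>2 + k\<^sup>2 * (oracle_variance y / \<tau>))"
proof -
  interpret D: prob_space D by (rule prob_space_D)
  let ?e = "\<lambda>v. Fv Fs v y - Fbar Fs y"
  have inj: "inj_on (Pair m) {..<\<tau>}" by (simp add: inj_on_def)
  have "minibatch Fs \<tau> w m y - Fbar Fs y = (1 / real \<tau>) *\<^sub>R (\<Sum>i\<in>Pair m ` {..<\<tau>}. ?e (w i))" for w
  proof -
    have "(\<Sum>i\<in>Pair m ` {..<\<tau>}. ?e (w i)) = (\<Sum>j<\<tau>. ?e (w (m, j)))"
      using inj by (simp add: sum.reindex)
    also have "\<dots> = (\<Sum>j<\<tau>. Fv Fs (w (m, j)) y) - real \<tau> *\<^sub>R Fbar Fs y"
      by (simp only: sum_subtractf sum_constant_scaleR card_lessThan)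
    finally have "(\<Sum>i\<in>Pair m ` {..<\<tau>}. ?e (w i)) = (\<Sum>j<\<tau>. Fv Fs (w (m, j)) y) - real \<tau> *\<^sub>R Fbar Fs y" .
    thus ?thesis using assms unfolding minibatch_def by (simp add: scaleR_diff_right)
  qed
  hence "(\<integral>\<^sup>+w. ennreal ((norm (c + k *\<^sub>R (minibatch Fs \<tau> w m y - Fbar Fs y)))\<^sup>2) \<partial>samples (Pair m ` {..<\<tau>}))
      = (\<integral>\<^sup>+w. ennreal ((norm (c + (k / \<tau>) *\<^sub>R (\<Sum>i\<in>Pair m ` {..<\<tau>}. ?e (w i))))\<^sup>2)
          \<partial>samples (Pair m ` {..<\<tau>}))"
    by simp
  also have "\<dots> = ennreal ((norm c)\<^sup>2 + (k / \<tau>)\<^sup>2 * real (card (Pair m ` {..<\<tau>})) * oracle_variance y)"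
    using borel_measurable_Fv_sample nn_integral_oracle_noise oracle_variance_nonneg
      integrable_inner_Fv_minus_Fbar integral_inner_Fv_minus_Fbar
    by (intro D.nn_integral_PiM_power2_norm_add_sum) auto
  also have "\<dots> = ennreal ((norm c)\<^sup>2 + k\<^sup>2 * (oracle_variance y / \<tau>))"
    using assms inj by (simp add: card_image power2_eq_square)
  finally show ?thesis .
qed

lemma nn_integral_minibatch_quadratic_le:
  assumes "0 < \<tau>" "0 \<le> b1" "0 \<le> b2"
    and bound: "\<And>w. f w \<le> (norm (c0 + k0 *\<^sub>R (minibatch Fs \<tau> w m y - Fbar Fs y)))\<^sup>2
        + b1 * (norm (c1 + k1 *\<^sub>R (minibatch Fs \<tau> w m y - Fbar Fs y)))\<^sup>2
        + b2 * (norm (minibatch Fs \<tau> w m y - Fbar Fs y))\<^sup>2"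
  shows "(\<integral>\<^sup>+w. ennreal (f w) \<partial>samples (Pair m ` {..<\<tau>}))
       \<le> ennreal ((norm c0)\<^sup>2 + b1 * (norm c1)\<^sup>2 + (k0\<^sup>2 + b1 * k1\<^sup>2 + b2) * (oracle_variance y / \<tau>))"
proof -
  let ?q = "\<lambda>c k w. ennreal ((norm (c + k *\<^sub>R (minibatch Fs \<tau> w m y - Fbar Fs y)))\<^sup>2)"
  let ?S = "samples (Pair m ` {..<\<tau>})" and ?V = "oracle_variance y / \<tau>"
  have "(\<lambda>w. minibatch Fs \<tau> w m y) \<in> borel_measurable ?S"
    by (rule borel_measurable_minibatch) auto
  hence meas: "?q c k \<in> borel_measurable ?S" for c k
    by measurable
  have "ennreal (f w) \<le> ?q c0 k0 w + ennreal b1 * ?q c1 k1 w + ennreal b2 * ?q 0 1 w" for w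
    using ennreal_leI[OF bound[of w]] assms(2,3) by (simp add: ennreal_plus ennreal_mult)
  hence "(\<integral>\<^sup>+w. ennreal (f w) \<partial>?S)
      \<le> (\<integral>\<^sup>+w. ?q c0 k0 w + ennreal b1 * ?q c1 k1 w + ennreal b2 * ?q 0 1 w \<partial>?S)"
    by (rule nn_integral_mono)
  also have "\<dots> = (\<integral>\<^sup>+w. ?q c0 k0 w \<partial>?S) + ennreal b1 * (\<integral>\<^sup>+w. ?q c1 k1 w \<partial>?S)
      + ennreal b2 * (\<integral>\<^sup>+w. ?q 0 1 w \<partial>?S)"
  proof -
    have "(\<integral>\<^sup>+w. f1 w + ennreal b1 * f2 w + ennreal b2 * f3 w \<partial>?S)
        = (\<integral>\<^sup>+w. f1 w \<partial>?S) + ennreal b1 * (\<integral>\<^sup>+w. f2 w \<partial>?S) + ennreal b2 * (\<integral>\<^sup>+w. f3 w \<partial>?S)"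
      if "f1 \<in> borel_measurable ?S" "f2 \<in> borel_measurable ?S" "f3 \<in> borel_measurable ?S" for f1 f2 f3
      using that by (simp add: nn_integral_add nn_integral_cmult)
    from this[OF meas meas meas] show ?thesis .
  qed
  also have "\<dots> = ennreal ((norm c0)\<^sup>2 + k0\<^sup>2 * ?V) + ennreal b1 * ennreal ((norm c1)\<^sup>2 + k1\<^sup>2 * ?V)
      + ennreal b2 * ennreal ((norm (0::real^'d))\<^sup>2 + 1\<^sup>2 * ?V)"
    by (simp only: nn_integral_minibatch[OF assms(1)])
  also have "\<dots> = ennreal ((norm c0)\<^sup>2 + b1 * (norm c1)\<^sup>2 + (k0\<^sup>2 + b1 * k1\<^sup>2 + b2) * ?V)"
    using assms(2,3) oracle_variance_nonneg \<open>0 < \<tau>\<close>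
    by (simp add: ennreal_plus[symmetric] ennreal_mult[symmetric] algebra_simps del: ennreal_plus)
  finally show ?thesis .
qed

end

locale speg_setting = expected_residual Fs D xstar \<delta>
  for Fs :: "'n::finite \<Rightarrow> real^'d \<Rightarrow> real^'d" and D xstar \<delta> +
  fixes L \<rho> \<gamma> \<omega> :: real and \<tau> K :: nat and x0 :: "real^'d"
  assumes lipschitz: "L-lipschitz_on UNIV (Fbar Fs)"
    and weak_minty: "\<And>x. inner (Fbar Fs x) (x - xstar) \<ge> - \<rho> * (norm (Fbar Fs x))\<^sup>2"
    and rho_pos: "0 < \<rho>" and rho_lt: "\<rho> < 1 / (2 * L)"
    and gamma_gt: "1 / (2 * L) < \<gamma>" and gamma_lt: "\<gamma> < 1 / L"
    and omega_pos: "0 < \<omega>" and omega_lt_gamma: "\<omega> < \<gamma> - 2 * \<rho>"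
    and omega_lt: "\<omega> < 1 / (4 * L) - \<gamma> / 4"
    and x0_ne: "x0 \<noteq> xstar" and K_ge: "2 \<le> K"
    and tau_ge_1: "1 \<le> real \<tau>"
    and tau_ge_delta: "32 * \<delta> / ((1 - L * \<gamma>) * L ^ 3 * \<omega>) \<le> real \<tau>"
    and tau_ge_delta_K: "48 * \<omega> * \<gamma> * \<delta> * (real K - 1) / (1 - L * \<gamma>)\<^sup>2 \<le> real \<tau>"
    and tau_ge_sigma_K: "2 * \<omega> * \<gamma> * (\<integral>v. (norm (Fv Fs v xstar))\<^sup>2 \<partial>D) * (real K - 1)
                          / ((1 - L * \<gamma>) * (norm (x0 - xstar))\<^sup>2) \<le> real \<tau>"
begin

abbreviation F :: "real^'d \<Rightarrow> real^'d" where
  "F \<equiv> Fbar Fs"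

definition \<beta> :: real where "\<beta> = L * \<gamma>"
definition \<mu> :: real where "\<mu> = L * \<omega>"
definition q :: real where "q = 1 / (1 - \<beta>)"
definition R0 :: real where "R0 = (norm (x0 - xstar))\<^sup>2"

lemma L_pos: "0 < L"
proof (rule ccontr)
  assume "\<not> 0 < L"
  hence "1 / (2 * L) \<le> 0" by (simp add: divide_nonpos_nonneg)
  thus False using rho_pos rho_lt by linarith
qed

lemma gamma_pos: "0 < \<gamma>"
  using gamma_gt L_pos by (smt (verit) divide_pos_pos)

lemma beta_gt_half: "1 / 2 < \<beta>"
  using gamma_gt L_pos unfolding \<beta>_def by (simp add: field_simps)

lemma beta_lt_1: "\<beta> < 1"
  using gamma_lt L_pos unfolding \<beta>_def by (simp add: field_simps)

lemma mu_pos: "0 < \<mu>"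
  unfolding \<mu>_def using L_pos omega_pos by simp

lemma four_mu_lt: "4 * \<mu> < 1 - \<beta>"
proof -
  have "4 * L * \<omega> < 4 * L * (1 / (4 * L) - \<gamma> / 4)"
    using omega_lt L_pos by simp
  also have "\<dots> = 1 - L * \<gamma>" using L_pos by (simp add: field_simps)
  finally show ?thesis unfolding \<mu>_def \<beta>_def by simp
qed

lemma one_minus_beta_q: "(1 - \<beta>) * q = 1"
  unfolding q_def using beta_lt_1 by simp

lemma q_ge_2: "2 \<le> q"
  unfolding q_def using beta_gt_half beta_lt_1 by (simp add: field_simps)

lemma mu_q_le: "\<mu> * q \<le> 1 / 4"
  unfolding q_def using four_mu_lt beta_lt_1 by (simp add: field_simps)

lemma R0_pos: "0 < R0"
  unfolding R0_def using x0_ne by simp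

lemma tau_pos: "0 < \<tau>"
  using tau_ge_1 by simp

lemma delta_div_tau_le: "\<delta> / \<tau> \<le> (1 - \<beta>) * L\<^sup>2 * \<mu> / 32"
proof -
  have "0 < (1 - \<beta>) * L\<^sup>2 * \<mu>" using beta_lt_1 L_pos mu_pos by simp
  moreover have "32 * \<delta> / ((1 - \<beta>) * L\<^sup>2 * \<mu>) \<le> \<tau>"
    using tau_ge_delta unfolding \<beta>_def \<mu>_def by (simp add: power2_eq_square power3_eq_cube mult.assoc)
  ultimately show ?thesis using tau_pos by (simp add: field_simps)
qed

lemma delta_K_div_tau_le: "\<delta> * (real K - 1) / \<tau> \<le> (1 - \<beta>)\<^sup>2 / (48 * \<omega> * \<gamma>)"
proof -
  have "0 < (1 - \<beta>)\<^sup>2" using beta_lt_1 by simp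
  thus ?thesis
    using tau_ge_delta_K tau_pos omega_pos gamma_pos unfolding \<beta>_def[symmetric]
    by (simp add: field_simps)
qed

lemma sigma_K_div_tau_le: "\<sigma>2 * (real K - 1) / \<tau> \<le> (1 - \<beta>) * R0 / (2 * \<omega> * \<gamma>)"
proof -
  have "0 < (1 - \<beta>) * R0" using beta_lt_1 R0_pos by simp
  thus ?thesis
    using tau_ge_sigma_K tau_pos omega_pos gamma_pos
    unfolding \<beta>_def[symmetric] R0_def[symmetric] \<sigma>2_def[symmetric]
    by (simp add: field_simps)
qed

(* theta is the Young weight splitting F xh' - g into its Lipschitz and its noise part, nu bounds
   the total coefficient of the oracle variance, and eps, eta, zeta are the constants of the
   one-step inequality lyapunov_step_real. *)
definition \<theta> :: real where "\<theta> = (1 + \<beta>) / 2"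
definition A :: real where "A = 2 * \<omega> * \<gamma> * q"
definition \<nu> :: real where "\<nu> = 7 * \<omega> * \<gamma> * q\<^sup>2"
definition \<epsilon> :: real where "\<epsilon> = 2 * \<nu> * \<delta> / \<tau>"
definition \<eta> :: real where "\<eta> = 2 * \<nu> * \<sigma>2 / \<tau>"
definition \<zeta> :: real where "\<zeta> = 3 * \<omega> * \<gamma> / 8 - 4 * \<omega> * \<gamma> * \<mu>\<^sup>2 * q\<^sup>2"

(* Since x - xh = gamma g for the last oracle output g, the second term measures how far the
   stale direction g is from F xh. *)
definition \<Phi> :: "(real^'d) \<times> (real^'d) \<Rightarrow> real" where
  "\<Phi> st = (norm (fst st - xstar))\<^sup>2 + A * (norm (F (snd st) - (1 / \<gamma>) *\<^sub>R (fst st - snd st)))\<^sup>2"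

lemma theta_pos: "0 < \<theta>" and theta_lt_1: "\<theta> < 1"
  unfolding \<theta>_def using beta_gt_half beta_lt_1 by auto

lemma A_pos: "0 < A"
  unfolding A_def using omega_pos gamma_pos q_ge_2 by simp

lemma nu_nonneg: "0 \<le> \<nu>"
  unfolding \<nu>_def using omega_pos gamma_pos by simp

lemma epsilon_nonneg: "0 \<le> \<epsilon>"
  unfolding \<epsilon>_def using nu_nonneg delta_nonneg by simp

lemma eta_nonneg: "0 \<le> \<eta>"
  unfolding \<eta>_def using nu_nonneg \<sigma>2_nonneg by simp

lemma \<Phi>_nonneg: "0 \<le> \<Phi> st"
  unfolding \<Phi>_def using A_pos by simp

lemma lyapunov_step_pointwise:
  "\<Phi> (speg_step \<gamma> \<omega> (x, xh) g)
     \<le> (norm ((x - xstar - \<omega> *\<^sub>R F xh) + (- \<omega>) *\<^sub>R (g - F xh)))\<^sup>2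
       + A * (L\<^sup>2 / \<theta>) * (norm ((\<gamma> *\<^sub>R (F xh - (1 / \<gamma>) *\<^sub>R (x - xh)) + \<omega> *\<^sub>R F xh)
                                 + (\<gamma> + \<omega>) *\<^sub>R (g - F xh)))\<^sup>2
       + A * (1 / (1 - \<theta>)) * (norm (g - F xh))\<^sup>2"
  (is "_ \<le> _ + A * (L\<^sup>2 / \<theta>) * (norm ?d)\<^sup>2 + A * (1 / (1 - \<theta>)) * ?E")
proof -
  define xh' where "xh' = x - \<omega> *\<^sub>R g - \<gamma> *\<^sub>R g"
  have "\<gamma> \<noteq> 0" using gamma_pos by simp
  have "norm (F xh' - F xh) \<le> L * norm (xh' - xh)"
    using lipschitz_onD[OF lipschitz UNIV_I UNIV_I, of xh' xh] by (simp add: dist_norm)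
  also have "xh' - xh = - ?d"
    using \<open>\<gamma> \<noteq> 0\<close> unfolding xh'_def by (simp add: algebra_simps)
  finally have "(norm (F xh' - F xh))\<^sup>2 \<le> L\<^sup>2 * (norm ?d)\<^sup>2"
    unfolding norm_minus_cancel by (simp add: power_mult_distrib[symmetric] power_mono)
  moreover have "(norm ((F xh' - F xh) + - (g - F xh)))\<^sup>2 \<le> (norm (F xh' - F xh))\<^sup>2 / \<theta> + ?E / (1 - \<theta>)"
    using power2_norm_add_le_weighted[OF theta_pos theta_lt_1, of "F xh' - F xh" "- (g - F xh)"]
    by (simp only: norm_minus_cancel)
  ultimately have "(norm ((F xh' - F xh) + - (g - F xh)))\<^sup>2 \<le> L\<^sup>2 * (norm ?d)\<^sup>2 / \<theta> + ?E / (1 - \<theta>)"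
    using theta_pos by (smt (verit) divide_right_mono)
  hence "A * (norm ((F xh' - F xh) + - (g - F xh)))\<^sup>2 \<le> A * (L\<^sup>2 * (norm ?d)\<^sup>2 / \<theta> + ?E / (1 - \<theta>))"
    using A_pos by (intro mult_left_mono) auto
  also have "\<dots> = A * (L\<^sup>2 / \<theta>) * (norm ?d)\<^sup>2 + A * (1 / (1 - \<theta>)) * ?E"
    by (simp add: distrib_left)
  finally have stale_le: "A * (norm ((F xh' - F xh) + - (g - F xh)))\<^sup>2
      \<le> A * (L\<^sup>2 / \<theta>) * (norm ?d)\<^sup>2 + A * (1 / (1 - \<theta>)) * ?E" .
  have fst_eq: "fst (speg_step \<gamma> \<omega> (x, xh) g) - xstar = (x - xstar - \<omega> *\<^sub>R F xh) + (- \<omega>) *\<^sub>R (g - F xh)"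
    unfolding speg_step_def by (simp add: algebra_simps)
  have snd_eq: "snd (speg_step \<gamma> \<omega> (x, xh) g) = xh'"
    unfolding speg_step_def xh'_def by simp
  have stale: "F xh' - (1 / \<gamma>) *\<^sub>R (fst (speg_step \<gamma> \<omega> (x, xh) g) - xh') = (F xh' - F xh) + - (g - F xh)"
    using \<open>\<gamma> \<noteq> 0\<close> unfolding speg_step_def xh'_def by simp
  show ?thesis
    using stale_le unfolding \<Phi>_def snd_eq stale fst_eq by simp
qed

lemma A_beta: "A * \<beta> = A - 2 * \<omega> * \<gamma>"
proof -
  have "A * \<beta> = 2 * \<omega> * \<gamma> * (\<beta> * q)" unfolding A_def by (simp add: mult_ac)
  also have "\<beta> * q = q - 1" using one_minus_beta_q by (simp add: algebra_simps)
  finally show ?thesis unfolding A_def by (simp add: algebra_simps)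
qed

lemma lipschitz_term_le:
  "A * (L\<^sup>2 / \<theta>) * (norm (\<gamma> *\<^sub>R u + \<omega> *\<^sub>R a))\<^sup>2
     \<le> A * (norm u)\<^sup>2 - 2 * \<omega> * \<gamma> * (norm u)\<^sup>2 + 4 * \<omega> * \<gamma> * \<mu>\<^sup>2 * q\<^sup>2 * (norm a)\<^sup>2"
proof -
  have t: "0 < \<beta> / \<theta>" "\<beta> / \<theta> < 1"
    using beta_gt_half beta_lt_1 unfolding \<theta>_def by (auto simp: field_simps)
  have "\<beta> *\<^sub>R u + \<mu> *\<^sub>R a = L *\<^sub>R (\<gamma> *\<^sub>R u + \<omega> *\<^sub>R a)"
    unfolding \<beta>_def \<mu>_def by (simp add: scaleR_add_right)
  hence "L\<^sup>2 * (norm (\<gamma> *\<^sub>R u + \<omega> *\<^sub>R a))\<^sup>2 = (norm (\<beta> *\<^sub>R u + \<mu> *\<^sub>R a))\<^sup>2"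
    using L_pos by (simp add: power_mult_distrib)
  also have "\<dots> \<le> (norm (\<beta> *\<^sub>R u))\<^sup>2 / (\<beta> / \<theta>) + (norm (\<mu> *\<^sub>R a))\<^sup>2 / (1 - \<beta> / \<theta>)"
    by (rule power2_norm_add_le_weighted[OF t])
  also have "\<dots> = \<theta> * (\<beta> * (norm u)\<^sup>2 + 2 * q * \<mu>\<^sup>2 * (norm a)\<^sup>2)"
    using beta_gt_half beta_lt_1 unfolding \<theta>_def q_def
    by (simp add: power_mult_distrib field_simps power2_eq_square)
  finally have "(L\<^sup>2 / \<theta>) * (norm (\<gamma> *\<^sub>R u + \<omega> *\<^sub>R a))\<^sup>2 \<le> \<beta> * (norm u)\<^sup>2 + 2 * q * \<mu>\<^sup>2 * (norm a)\<^sup>2"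
    using theta_pos by (simp add: field_simps)
  hence "A * ((L\<^sup>2 / \<theta>) * (norm (\<gamma> *\<^sub>R u + \<omega> *\<^sub>R a))\<^sup>2)
      \<le> A * (\<beta> * (norm u)\<^sup>2 + 2 * q * \<mu>\<^sup>2 * (norm a)\<^sup>2)"
    by (rule mult_left_mono) (use A_pos in simp)
  also have "\<dots> = A * \<beta> * (norm u)\<^sup>2 + 4 * \<omega> * \<gamma> * \<mu>\<^sup>2 * q\<^sup>2 * (norm a)\<^sup>2"
    unfolding A_def by (simp add: power2_eq_square algebra_simps)
  finally show ?thesis unfolding A_beta by (simp add: algebra_simps)
qed

lemma variance_coeff_le: "\<omega>\<^sup>2 + A * (L\<^sup>2 / \<theta>) * (\<gamma> + \<omega>)\<^sup>2 + A * (1 / (1 - \<theta>)) \<le> \<nu>"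
proof -
  define W where "W = \<omega> * \<gamma> * q\<^sup>2"
  have "q \<le> q\<^sup>2 / 2" "1 \<le> q\<^sup>2"
    using q_ge_2 mult_right_mono[OF q_ge_2, of q] mult_mono[of 1 q 1 q] by (auto simp: power2_eq_square)
  have "\<omega>\<^sup>2 \<le> \<omega> * \<gamma>"
    using omega_lt_gamma rho_pos omega_pos by (simp add: power2_eq_square)
  also have "\<dots> \<le> W"
    unfolding W_def using \<open>1 \<le> q\<^sup>2\<close> omega_pos gamma_pos by simp
  finally have first: "\<omega>\<^sup>2 \<le> W" .
  have "L\<^sup>2 * (\<gamma> + \<omega>)\<^sup>2 = (\<beta> + \<mu>)\<^sup>2"
    unfolding \<beta>_def \<mu>_def by (simp add: power2_eq_square algebra_simps)
  also have "\<dots> \<le> 1"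
    using four_mu_lt mu_pos beta_gt_half by (simp add: power_le_one)
  finally have "L\<^sup>2 / \<theta> * (\<gamma> + \<omega>)\<^sup>2 \<le> 4 / 3"
    using beta_gt_half unfolding \<theta>_def by (simp add: field_simps)
  hence "A * (L\<^sup>2 / \<theta> * (\<gamma> + \<omega>)\<^sup>2) \<le> A * (4 / 3)"
    by (rule mult_left_mono) (use A_pos in simp)
  hence "A * (L\<^sup>2 / \<theta>) * (\<gamma> + \<omega>)\<^sup>2 \<le> A * (4 / 3)"
    by (simp only: mult.assoc)
  also have "\<dots> \<le> 4 / 3 * W"
    unfolding A_def W_def using \<open>q \<le> q\<^sup>2 / 2\<close> omega_pos gamma_pos by simp
  finally have second: "A * (L\<^sup>2 / \<theta>) * (\<gamma> + \<omega>)\<^sup>2 \<le> 4 / 3 * W" .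
  have "1 / (1 - \<theta>) = 2 * q"
    unfolding \<theta>_def q_def using beta_lt_1 by (simp add: field_simps)
  hence third: "A * (1 / (1 - \<theta>)) = 4 * W"
    unfolding A_def W_def by (simp add: power2_eq_square)
  have "0 \<le> W" "\<nu> = 7 * W" unfolding W_def \<nu>_def using omega_pos gamma_pos by simp_all
  thus ?thesis using first second third by linarith
qed

lemma variance_term_le:
  assumes "V \<le> (\<delta> * (norm (xh - xstar))\<^sup>2 + 2 * \<sigma>2) / \<tau>"
    and "(norm (xh - xstar))\<^sup>2 \<le> 2 * R + 2 * \<gamma>\<^sup>2 * P" and "0 \<le> P"
  shows "\<nu> * V \<le> \<epsilon> * R + \<omega> * \<gamma> / 4 * P + \<eta>"
proof -
  have "2 * \<nu> * \<delta> * \<gamma>\<^sup>2 / \<tau> = 14 * \<omega> * \<gamma> * q\<^sup>2 * \<gamma>\<^sup>2 * (\<delta> / \<tau>)"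
    unfolding \<nu>_def by simp
  also have "\<dots> \<le> 14 * \<omega> * \<gamma> * q\<^sup>2 * \<gamma>\<^sup>2 * ((1 - \<beta>) * L\<^sup>2 * \<mu> / 32)"
    using delta_div_tau_le omega_pos gamma_pos by (intro mult_left_mono) auto
  also have "\<dots> = 14 / 32 * (\<omega> * \<gamma>) * ((1 - \<beta>) * q) * (\<gamma> * L)\<^sup>2 * (\<mu> * q)"
    by (simp add: power2_eq_square)
  also have "\<dots> = 14 / 32 * (\<omega> * \<gamma>) * \<beta>\<^sup>2 * (\<mu> * q)"
    unfolding one_minus_beta_q by (simp add: \<beta>_def mult.commute)
  also have "\<dots> \<le> 14 / 32 * (\<omega> * \<gamma>) * 1 * (1 / 4)"
    using mu_q_le beta_gt_half beta_lt_1 omega_pos gamma_pos mu_pos q_ge_2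
    by (intro mult_mono) (auto simp: power_le_one)
  finally have coeff: "2 * \<nu> * \<delta> * \<gamma>\<^sup>2 / \<tau> \<le> \<omega> * \<gamma> / 4"
    using mult_pos_pos[OF omega_pos gamma_pos] by linarith
  have "\<nu> * V \<le> \<nu> * ((\<delta> * (2 * R + 2 * \<gamma>\<^sup>2 * P) + 2 * \<sigma>2) / \<tau>)"
    using assms nu_nonneg delta_nonneg tau_pos
    by (intro mult_left_mono order.trans[OF assms(1)] divide_right_mono add_right_mono) auto
  also have "\<dots> = \<epsilon> * R + (2 * \<nu> * \<delta> * \<gamma>\<^sup>2 / \<tau>) * P + \<eta>"
    unfolding \<epsilon>_def \<eta>_def by (simp add: add_divide_distrib algebra_simps)
  also have "\<dots> \<le> \<epsilon> * R + \<omega> * \<gamma> / 4 * P + \<eta>"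
    using coeff \<open>0 \<le> P\<close> by (intro add_right_mono add_left_mono mult_right_mono)
  finally show ?thesis .
qed

lemma lyapunov_step_real:
  assumes "0 \<le> V" "V \<le> (\<delta> * (norm (xh - xstar))\<^sup>2 + 2 * \<sigma>2) / \<tau>"
  shows "(norm (x - xstar - \<omega> *\<^sub>R F xh))\<^sup>2
       + A * (L\<^sup>2 / \<theta>) * (norm (\<gamma> *\<^sub>R (F xh - (1 / \<gamma>) *\<^sub>R (x - xh)) + \<omega> *\<^sub>R F xh))\<^sup>2
       + (\<omega>\<^sup>2 + A * (L\<^sup>2 / \<theta>) * (\<gamma> + \<omega>)\<^sup>2 + A * (1 / (1 - \<theta>))) * V + \<zeta> * (norm (F xh))\<^sup>2
     \<le> (1 + \<epsilon>) * \<Phi> (x, xh) + \<eta>"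
proof -
  define p where "p = (1 / \<gamma>) *\<^sub>R (x - xh)"
  define u where "u = F xh - p"
  define R P U G where "R = (norm (x - xstar))\<^sup>2" and "P = (norm p)\<^sup>2"
    and "U = (norm u)\<^sup>2" and "G = (norm (F xh))\<^sup>2"
  define W where "W = \<omega> * \<gamma>"
  have "\<gamma> \<noteq> 0" using gamma_pos by simp
  hence x_eq: "x - xstar = (xh - xstar) + \<gamma> *\<^sub>R p"
    unfolding p_def by simp
  have "(norm ((xh - xstar) + \<gamma> *\<^sub>R p - \<omega> *\<^sub>R F xh))\<^sup>2
      \<le> (norm ((xh - xstar) + \<gamma> *\<^sub>R p))\<^sup>2 - \<omega> * \<gamma> * (norm p)\<^sup>2 + \<omega> * \<gamma> * (norm (F xh - p))\<^sup>2"
    using weak_minty omega_pos omega_lt_gamma by (intro power2_norm_minty_step_le) auto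
  hence minty: "(norm (x - xstar - \<omega> *\<^sub>R F xh))\<^sup>2 \<le> R - W * P + W * U"
    unfolding R_def P_def U_def W_def u_def x_eq[symmetric] .
  have lipschitz: "A * (L\<^sup>2 / \<theta>) * (norm (\<gamma> *\<^sub>R u + \<omega> *\<^sub>R F xh))\<^sup>2
      \<le> A * U - 2 * W * U + 4 * W * \<mu>\<^sup>2 * q\<^sup>2 * G"
    using lipschitz_term_le[of u "F xh"] unfolding U_def G_def W_def by (simp add: mult.assoc)
  have "(norm (xh - xstar))\<^sup>2 \<le> 2 * R + 2 * \<gamma>\<^sup>2 * P"
    using power2_norm_add_le[of "x - xstar" "(- \<gamma>) *\<^sub>R p"] unfolding R_def P_def x_eq
    by (simp add: power_mult_distrib)
  hence noise: "(\<omega>\<^sup>2 + A * (L\<^sup>2 / \<theta>) * (\<gamma> + \<omega>)\<^sup>2 + A * (1 / (1 - \<theta>))) * V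
      \<le> \<epsilon> * R + W / 4 * P + \<eta>"
    using mult_right_mono[OF variance_coeff_le \<open>0 \<le> V\<close>] variance_term_le[OF assms(2)]
    unfolding P_def W_def by fastforce
  have "G \<le> 2 * P + 2 * U"
    using power2_norm_add_le[of p u] unfolding G_def P_def U_def u_def by simp
  moreover have "0 \<le> 3 * W / 8"
    using omega_pos gamma_pos unfolding W_def by simp
  ultimately have "3 * W / 8 * G \<le> 3 * W / 8 * (2 * P + 2 * U)"
    by (rule mult_left_mono)
  hence gradient: "3 * W / 8 * G \<le> 3 * W / 4 * P + 3 * W / 4 * U"
    by (simp add: algebra_simps)
  have "\<zeta> * G = 3 * W / 8 * G - 4 * W * \<mu>\<^sup>2 * q\<^sup>2 * G"
    unfolding \<zeta>_def W_def by (simp add: algebra_simps)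
  moreover have "(1 + \<epsilon>) * \<Phi> (x, xh) = R + A * U + \<epsilon> * R + \<epsilon> * (A * U)"
    unfolding \<Phi>_def R_def U_def u_def p_def by (simp add: algebra_simps)
  moreover have "0 \<le> \<epsilon> * (A * U)" "0 \<le> W * U"
    using epsilon_nonneg A_pos omega_pos gamma_pos unfolding U_def W_def by simp_all
  ultimately show ?thesis
    using minty lipschitz noise gradient unfolding u_def p_def G_def by linarith
qed

lemma kappa_pos: "0 < 1 - L * (\<gamma> + 4 * \<omega>)"
  using four_mu_lt unfolding \<beta>_def \<mu>_def by (simp add: algebra_simps)

lemma zeta_ge: "3 * \<omega> * \<gamma> * (1 - L * (\<gamma> + 4 * \<omega>)) * q / 8 \<le> \<zeta>"
proof -
  define z where "z = \<mu> * q"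
  have "0 \<le> z" "z \<le> 1 / 4"
    unfolding z_def using mu_q_le mu_pos q_ge_2 by auto
  hence "4 * z\<^sup>2 \<le> 3 / 2 * z"
    using mult_left_mono[of z "1 / 4" z] by (simp add: power2_eq_square)
  hence "\<omega> * \<gamma> * (4 * z\<^sup>2) \<le> \<omega> * \<gamma> * (3 / 2 * z)"
    using omega_pos gamma_pos by (intro mult_left_mono) auto
  moreover have "(1 - L * (\<gamma> + 4 * \<omega>)) * q = 1 - 4 * z"
    using one_minus_beta_q unfolding z_def \<beta>_def \<mu>_def by (simp add: algebra_simps)
  hence "3 * \<omega> * \<gamma> * (1 - L * (\<gamma> + 4 * \<omega>)) * q / 8 = 3 * \<omega> * \<gamma> / 8 * (1 - 4 * z)"
    by (simp only: mult.assoc times_divide_eq_left[symmetric])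
  hence "3 * \<omega> * \<gamma> * (1 - L * (\<gamma> + 4 * \<omega>)) * q / 8 = 3 * \<omega> * \<gamma> / 8 - \<omega> * \<gamma> * (3 / 2 * z)"
    by (simp add: algebra_simps)
  moreover have "\<zeta> = 3 * \<omega> * \<gamma> / 8 - \<omega> * \<gamma> * (4 * z\<^sup>2)"
    unfolding \<zeta>_def z_def by (simp add: power_mult_distrib algebra_simps)
  ultimately show ?thesis by linarith
qed

lemma zeta_pos: "0 < \<zeta>"
  using zeta_ge omega_pos gamma_pos kappa_pos q_ge_2
  by (smt (verit) divide_pos_pos mult_pos_pos)

lemma nn_integral_lyapunov_step_le:
  "(\<integral>\<^sup>+w. ennreal (\<Phi> (speg_step \<gamma> \<omega> (x, xh) (minibatch Fs \<tau> w m xh))) \<partial>samples (Pair m ` {..<\<tau>}))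
     \<le> ennreal ((1 + \<epsilon>) * \<Phi> (x, xh) + \<eta> - \<zeta> * (norm (F xh))\<^sup>2)"
proof -
  have "(\<integral>\<^sup>+w. ennreal (\<Phi> (speg_step \<gamma> \<omega> (x, xh) (minibatch Fs \<tau> w m xh))) \<partial>samples (Pair m ` {..<\<tau>}))
      \<le> ennreal ((norm (x - xstar - \<omega> *\<^sub>R F xh))\<^sup>2
         + A * (L\<^sup>2 / \<theta>) * (norm (\<gamma> *\<^sub>R (F xh - (1 / \<gamma>) *\<^sub>R (x - xh)) + \<omega> *\<^sub>R F xh))\<^sup>2
         + ((- \<omega>)\<^sup>2 + A * (L\<^sup>2 / \<theta>) * (\<gamma> + \<omega>)\<^sup>2 + A * (1 / (1 - \<theta>))) * (oracle_variance xh / \<tau>))"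
    (is "_ \<le> ennreal ?lhs")
    using A_pos theta_pos theta_lt_1
    by (intro nn_integral_minibatch_quadratic_le[OF tau_pos _ _ lyapunov_step_pointwise]) auto
  also have "\<dots> \<le> ennreal ((1 + \<epsilon>) * \<Phi> (x, xh) + \<eta> - \<zeta> * (norm (F xh))\<^sup>2)"
    (is "_ \<le> ennreal ?rhs")
  proof (rule ennreal_leI)
    have "oracle_variance xh / \<tau> \<le> (\<delta> * (norm (xh - xstar))\<^sup>2 + 2 * \<sigma>2) / \<tau>"
      using oracle_variance_le by (simp add: divide_right_mono)
    moreover have "0 \<le> oracle_variance xh / \<tau>"
      using oracle_variance_nonneg by simp
    ultimately show "?lhs \<le> ?rhs"
      unfolding power2_minus using lyapunov_step_real[of "oracle_variance xh / \<tau>" xh x] by linarith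
  qed
  finally show ?thesis .
qed

lemma zeta_le_lyapunov: "\<zeta> * (norm (F xh))\<^sup>2 \<le> (1 + \<epsilon>) * \<Phi> (x, xh) + \<eta>"
proof -
  have "0 \<le> (\<delta> * (norm (xh - xstar))\<^sup>2 + 2 * \<sigma>2) / \<tau>"
    using \<sigma>2_nonneg delta_nonneg by simp
  moreover have "0 \<le> A * (L\<^sup>2 / \<theta>) * (norm (\<gamma> *\<^sub>R (F xh - (1 / \<gamma>) *\<^sub>R (x - xh)) + \<omega> *\<^sub>R F xh))\<^sup>2"
    using A_pos theta_pos by simp
  ultimately show ?thesis
    using lyapunov_step_real[of 0 xh x] by (smt (verit) zero_le_power2)
qed

lemma borel_measurable_\<Phi>: "(\<lambda>st. ennreal (\<Phi> st)) \<in> borel_measurable borel"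
  unfolding \<Phi>_def borel_prod[symmetric] using borel_measurable_Fbar by measurable

lemma borel_measurable_lyapunov_bound:
  "(\<lambda>st. ennreal ((1 + \<epsilon>) * \<Phi> st + \<eta> - \<zeta> * (norm (F (snd st)))\<^sup>2)) \<in> borel_measurable borel"
  unfolding \<Phi>_def borel_prod[symmetric] using borel_measurable_Fbar by measurable

lemma borel_measurable_norm_F_snd:
  "(\<lambda>st :: (real^'d) \<times> (real^'d). ennreal ((norm (F (snd st)))\<^sup>2)) \<in> borel_measurable borel"
  unfolding borel_prod[symmetric] using borel_measurable_Fbar by measurable

lemma ennreal_lyapunov_bound_add:
  "ennreal ((1 + \<epsilon>) * \<Phi> st + \<eta> - \<zeta> * (norm (F (snd st)))\<^sup>2) + ennreal \<zeta> * ennreal ((norm (F (snd st)))\<^sup>2)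
     = ennreal (1 + \<epsilon>) * ennreal (\<Phi> st) + ennreal \<eta>"
proof -
  have "\<zeta> * (norm (F (snd st)))\<^sup>2 \<le> (1 + \<epsilon>) * \<Phi> st + \<eta>"
    using zeta_le_lyapunov[of "snd st" "fst st"] by simp
  hence "ennreal ((1 + \<epsilon>) * \<Phi> st + \<eta> - \<zeta> * (norm (F (snd st)))\<^sup>2) + ennreal (\<zeta> * (norm (F (snd st)))\<^sup>2)
      = ennreal ((1 + \<epsilon>) * \<Phi> st + \<eta>)"
    using zeta_pos by (subst ennreal_plus[symmetric]) auto
  moreover have "ennreal \<zeta> * ennreal ((norm (F (snd st)))\<^sup>2) = ennreal (\<zeta> * (norm (F (snd st)))\<^sup>2)"
    using zeta_pos by (simp add: ennreal_mult)
  ultimately show ?thesis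
    using epsilon_nonneg eta_nonneg \<Phi>_nonneg[of st] by (simp add: ennreal_plus ennreal_mult)
qed

definition lyapunov_mean :: "nat \<Rightarrow> ennreal" where
  "lyapunov_mean k = (\<integral>\<^sup>+s. ennreal (\<Phi> (speg Fs \<tau> \<gamma> \<omega> x0 s k)) \<partial>samples UNIV)"

definition grad_mean :: "nat \<Rightarrow> ennreal" where
  "grad_mean k = (\<integral>\<^sup>+s. ennreal ((norm (F (snd (speg Fs \<tau> \<gamma> \<omega> x0 s k))))\<^sup>2) \<partial>samples UNIV)"

lemma lyapunov_mean_Suc_le:
  "lyapunov_mean (Suc k) + ennreal \<zeta> * grad_mean k \<le> ennreal (1 + \<epsilon>) * lyapunov_mean k + ennreal \<eta>"
proof -
  interpret \<Omega>: prob_space "samples UNIV" by (rule prob_space_samples)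
  let ?x = "\<lambda>s. speg Fs \<tau> \<gamma> \<omega> x0 s k"
  let ?B = "\<lambda>st. ennreal ((1 + \<epsilon>) * \<Phi> st + \<eta> - \<zeta> * (norm (F (snd st)))\<^sup>2)"
  let ?G = "\<lambda>st :: (real^'d) \<times> (real^'d). ennreal ((norm (F (snd st)))\<^sup>2)"
  have x_meas: "?x \<in> borel_measurable (samples UNIV)"
    by (rule borel_measurable_speg) simp
  note B_meas = measurable_compose[OF x_meas borel_measurable_lyapunov_bound]
  note G_meas = measurable_compose[OF x_meas borel_measurable_norm_F_snd]
  have "lyapunov_mean (Suc k) \<le> (\<integral>\<^sup>+s. ?B (?x s) \<partial>samples UNIV)"
    unfolding lyapunov_mean_def
  proof (rule nn_integral_speg_Suc_le[OF borel_measurable_\<Phi> borel_measurable_lyapunov_bound])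
    fix st :: "(real^'d) \<times> (real^'d)"
    obtain x xh where "st = (x, xh)" by fastforce
    thus "(\<integral>\<^sup>+w. ennreal (\<Phi> (speg_step \<gamma> \<omega> st (minibatch Fs \<tau> w (Suc k) (snd st))))
        \<partial>samples (Pair (Suc k) ` {..<\<tau>})) \<le> ?B st"
      using nn_integral_lyapunov_step_le[where x=x and xh=xh] by simp
  qed
  moreover have "ennreal \<zeta> * grad_mean k = (\<integral>\<^sup>+s. ennreal \<zeta> * ?G (?x s) \<partial>samples UNIV)"
    unfolding grad_mean_def by (rule nn_integral_cmult[symmetric, OF G_meas])
  ultimately have "lyapunov_mean (Suc k) + ennreal \<zeta> * grad_mean k
      \<le> (\<integral>\<^sup>+s. ?B (?x s) \<partial>samples UNIV) + (\<integral>\<^sup>+s. ennreal \<zeta> * ?G (?x s) \<partial>samples UNIV)"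
    by (simp add: add_right_mono)
  also have "\<dots> = (\<integral>\<^sup>+s. ?B (?x s) + ennreal \<zeta> * ?G (?x s) \<partial>samples UNIV)"
    using B_meas G_meas by (intro nn_integral_add[symmetric]) auto
  also have "\<dots> = (\<integral>\<^sup>+s. ennreal (1 + \<epsilon>) * ennreal (\<Phi> (?x s)) + ennreal \<eta> \<partial>samples UNIV)"
    by (intro nn_integral_cong) (rule ennreal_lyapunov_bound_add)
  also have "\<dots> = ennreal (1 + \<epsilon>) * lyapunov_mean k + ennreal \<eta>"
    unfolding lyapunov_mean_def using measurable_compose[OF x_meas borel_measurable_\<Phi>]
    by (subst nn_integral_add) (auto simp: nn_integral_cmult \<Omega>.emeasure_space_1)
  finally show ?thesis .
qed

lemma lyapunov_init_pointwise:
  "\<Phi> (x0, x0 - \<gamma> *\<^sub>R g) \<le> R0 + 2 * A * \<beta>\<^sup>2 * (norm g)\<^sup>2 + 2 * A * (norm (g - F x0))\<^sup>2"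
proof -
  have "norm (F (x0 - \<gamma> *\<^sub>R g) - F x0) \<le> L * norm ((x0 - \<gamma> *\<^sub>R g) - x0)"
    using lipschitz_onD[OF lipschitz UNIV_I UNIV_I, of "x0 - \<gamma> *\<^sub>R g" x0] by (simp add: dist_norm)
  also have "\<dots> = \<beta> * norm g"
    unfolding \<beta>_def using gamma_pos L_pos by simp
  finally have "(norm (F (x0 - \<gamma> *\<^sub>R g) - F x0))\<^sup>2 \<le> \<beta>\<^sup>2 * (norm g)\<^sup>2"
    by (metis norm_ge_zero power_mono power_mult_distrib)
  moreover have "(norm (F (x0 - \<gamma> *\<^sub>R g) - g))\<^sup>2
      \<le> 2 * (norm (F (x0 - \<gamma> *\<^sub>R g) - F x0))\<^sup>2 + 2 * (norm (g - F x0))\<^sup>2"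
    using power2_norm_add_le[of "F (x0 - \<gamma> *\<^sub>R g) - F x0" "F x0 - g"] by (simp add: norm_minus_commute)
  ultimately have "A * (norm (F (x0 - \<gamma> *\<^sub>R g) - g))\<^sup>2 \<le> A * (2 * \<beta>\<^sup>2 * (norm g)\<^sup>2 + 2 * (norm (g - F x0))\<^sup>2)"
    using A_pos by (intro mult_left_mono) auto
  moreover have "(1 / \<gamma>) *\<^sub>R (x0 - (x0 - \<gamma> *\<^sub>R g)) = g"
    using gamma_pos by simp
  ultimately show ?thesis
    unfolding \<Phi>_def R0_def by (simp add: algebra_simps)
qed

lemma grad_x0_term_le: "2 * A * \<beta>\<^sup>2 * (norm (F x0))\<^sup>2 \<le> R0"
proof -
  have "norm (F x0) \<le> L * norm (x0 - xstar)"
    using lipschitz_onD[OF lipschitz UNIV_I UNIV_I, of x0 xstar] root by (simp add: dist_norm)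
  hence "(norm (F x0))\<^sup>2 \<le> L\<^sup>2 * R0"
    unfolding R0_def by (metis norm_ge_zero power_mono power_mult_distrib)
  hence "2 * A * \<beta>\<^sup>2 * (norm (F x0))\<^sup>2 \<le> 2 * A * \<beta>\<^sup>2 * (L\<^sup>2 * R0)"
    using A_pos by (intro mult_left_mono) auto
  also have "\<dots> = 4 * (\<mu> * q) * \<beta> ^ 3 * R0"
    unfolding A_def \<mu>_def \<beta>_def by (simp add: power2_eq_square power3_eq_cube algebra_simps)
  also have "\<dots> \<le> 4 * (1 / 4) * 1 * R0"
    using mu_q_le mu_pos q_ge_2 beta_gt_half beta_lt_1 R0_pos
    by (intro mult_right_mono mult_mono) (auto simp: power_le_one)
  finally show ?thesis by simp
qed

lemma A_delta_div_tau_le: "4 * A * (\<delta> / \<tau>) \<le> 1"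
proof -
  have "4 * A * (\<delta> / \<tau>) \<le> 4 * A * ((1 - \<beta>) * L\<^sup>2 * \<mu> / 32)"
    using delta_div_tau_le A_pos by (intro mult_left_mono) auto
  also have "\<dots> = ((1 - \<beta>) * q) * (\<beta> * \<mu>\<^sup>2 / 4)"
    unfolding A_def \<mu>_def \<beta>_def by (simp add: power2_eq_square field_simps)
  also have "\<dots> \<le> 1"
  proof -
    have "\<mu>\<^sup>2 \<le> 1"
      using four_mu_lt mu_pos beta_gt_half by (simp add: power_le_one)
    hence "\<beta> * \<mu>\<^sup>2 \<le> 1 * 1"
      using beta_gt_half beta_lt_1 by (intro mult_mono) auto
    thus ?thesis unfolding one_minus_beta_q by simp
  qed
  finally show ?thesis .
qed

lemma A_sigma_div_tau_le: "8 * A * (\<sigma>2 / \<tau>) \<le> 8 * R0"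
proof -
  have "\<sigma>2 / \<tau> \<le> \<sigma>2 * (real K - 1) / \<tau>"
    using K_ge \<sigma>2_nonneg by (simp add: divide_right_mono mult_le_cancel_left1)
  also have "\<dots> \<le> (1 - \<beta>) * R0 / (2 * \<omega> * \<gamma>)"
    by (rule sigma_K_div_tau_le)
  finally have "8 * A * (\<sigma>2 / \<tau>) \<le> 8 * A * ((1 - \<beta>) * R0 / (2 * \<omega> * \<gamma>))"
    using A_pos by (intro mult_left_mono) auto
  also have "\<dots> = 8 * ((1 - \<beta>) * q) * R0"
    unfolding A_def using omega_pos gamma_pos by (simp add: field_simps)
  finally show ?thesis unfolding one_minus_beta_q by simp
qed

lemma lyapunov_init_real:
  assumes "0 \<le> V" "V \<le> (\<delta> * R0 + 2 * \<sigma>2) / \<tau>"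
  shows "R0 + 2 * A * \<beta>\<^sup>2 * (norm (F x0))\<^sup>2 + (2 * A * \<beta>\<^sup>2 + 2 * A) * V \<le> 11 * R0"
proof -
  have "\<beta>\<^sup>2 \<le> 1"
    using beta_gt_half beta_lt_1 by (simp add: power_le_one)
  hence "(2 * A * \<beta>\<^sup>2 + 2 * A) * V \<le> 4 * A * V"
    using A_pos assms(1) by (intro mult_right_mono) auto
  also have "\<dots> \<le> 4 * A * (\<delta> / \<tau>) * R0 + 8 * A * (\<sigma>2 / \<tau>)"
    using mult_left_mono[OF assms(2), of "4 * A"] A_pos by (simp add: add_divide_distrib algebra_simps)
  also have "\<dots> \<le> R0 + 8 * R0"
    using mult_right_mono[OF A_delta_div_tau_le, of R0] R0_pos A_sigma_div_tau_le by simp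
  finally show ?thesis using grad_x0_term_le by linarith
qed

lemma lyapunov_mean_0_le: "lyapunov_mean 0 \<le> ennreal (11 * R0)"
proof -
  have "lyapunov_mean 0
      = (\<integral>\<^sup>+w. ennreal (\<Phi> (x0, x0 - \<gamma> *\<^sub>R minibatch Fs \<tau> w 0 x0)) \<partial>samples (Pair 0 ` {..<\<tau>}))"
    unfolding lyapunov_mean_def nn_integral_speg[OF borel_measurable_\<Phi>] speg_samples_0 by simp
  also have "\<dots> \<le> ennreal ((norm (x0 - xstar))\<^sup>2 + 2 * A * \<beta>\<^sup>2 * (norm (F x0))\<^sup>2
      + (0\<^sup>2 + 2 * A * \<beta>\<^sup>2 * 1\<^sup>2 + 2 * A) * (oracle_variance x0 / \<tau>))"
    using A_pos lyapunov_init_pointwise unfolding R0_def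
    by (intro nn_integral_minibatch_quadratic_le[OF tau_pos]) auto
  also have "\<dots> \<le> ennreal (11 * R0)"
  proof (rule ennreal_leI)
    have "oracle_variance x0 / \<tau> \<le> (\<delta> * R0 + 2 * \<sigma>2) / \<tau>"
      using oracle_variance_le unfolding R0_def by (simp add: divide_right_mono)
    thus "(norm (x0 - xstar))\<^sup>2 + 2 * A * \<beta>\<^sup>2 * (norm (F x0))\<^sup>2
        + (0\<^sup>2 + 2 * A * \<beta>\<^sup>2 * 1\<^sup>2 + 2 * A) * (oracle_variance x0 / \<tau>) \<le> 11 * R0"
      using lyapunov_init_real[of "oracle_variance x0 / \<tau>"] oracle_variance_nonneg
      unfolding R0_def by simp
  qed
  finally show ?thesis .
qed

(* B solves B = 11 R0 + 7 q R0 + 7/24 B: 11 R0 bounds the initial Lyapunov value and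
   7/24 B + 7 q R0 the perturbations accumulated over K - 1 steps, see budget_le. *)
definition B :: real where "B = 24 / 17 * (11 + 7 * q) * R0"

lemma B_nonneg: "0 \<le> B"
  unfolding B_def using q_ge_2 R0_pos by simp

lemma epsilon_K_le: "\<epsilon> * (real K - 1) \<le> 7 / 24"
proof -
  have "\<epsilon> * (real K - 1) = 2 * \<nu> * (\<delta> * (real K - 1) / \<tau>)"
    unfolding \<epsilon>_def by simp
  also have "\<dots> \<le> 2 * \<nu> * ((1 - \<beta>)\<^sup>2 / (48 * \<omega> * \<gamma>))"
    using delta_K_div_tau_le nu_nonneg by (intro mult_left_mono) auto
  also have "\<dots> = 7 / 24 * ((1 - \<beta>) * q)\<^sup>2"
    unfolding \<nu>_def using omega_pos gamma_pos by (simp add: field_simps power2_eq_square)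
  finally show ?thesis
    unfolding one_minus_beta_q by simp
qed

lemma eta_K_le: "\<eta> * (real K - 1) \<le> 7 * q * R0"
proof -
  have "\<eta> * (real K - 1) = 2 * \<nu> * (\<sigma>2 * (real K - 1) / \<tau>)"
    unfolding \<eta>_def by simp
  also have "\<dots> \<le> 2 * \<nu> * ((1 - \<beta>) * R0 / (2 * \<omega> * \<gamma>))"
    using sigma_K_div_tau_le nu_nonneg by (intro mult_left_mono) auto
  also have "\<dots> = 7 * q * ((1 - \<beta>) * q) * R0"
    unfolding \<nu>_def using omega_pos gamma_pos by (simp add: field_simps power2_eq_square)
  finally show ?thesis
    unfolding one_minus_beta_q by simp
qed

lemma budget_le: "11 * R0 + real (K - 1) * (\<epsilon> * B + \<eta>) \<le> B"
proof -
  have "real (K - 1) * (\<epsilon> * B + \<eta>) = (\<epsilon> * (real K - 1)) * B + \<eta> * (real K - 1)"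
    using K_ge by (simp add: of_nat_diff algebra_simps)
  also have "\<dots> \<le> 7 / 24 * B + 7 * q * R0"
    using epsilon_K_le eta_K_le B_nonneg by (intro add_mono mult_right_mono) auto
  finally show ?thesis
    unfolding B_def by (simp add: algebra_simps)
qed

lemma B_div_le: "B / (\<zeta> * real (K - 1)) \<le> 48 / (\<omega> * \<gamma> * (1 - L * (\<gamma> + 4 * \<omega>))) * R0 / (real K - 1)"
proof -
  define \<kappa> where "\<kappa> = 1 - L * (\<gamma> + 4 * \<omega>)"
  have "0 < \<omega> * \<gamma> * \<kappa>"
    unfolding \<kappa>_def using omega_pos gamma_pos kappa_pos by simp
  hence "\<omega> \<noteq> 0" "\<gamma> \<noteq> 0" "\<kappa> \<noteq> 0" by auto
  have "B \<le> 18 * q * R0"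
    unfolding B_def using q_ge_2 R0_pos by (intro mult_right_mono) auto
  also have "\<dots> = 48 / (\<omega> * \<gamma> * \<kappa>) * R0 * (3 * \<omega> * \<gamma> * \<kappa> * q / 8)"
    using \<open>\<omega> \<noteq> 0\<close> \<open>\<gamma> \<noteq> 0\<close> \<open>\<kappa> \<noteq> 0\<close> by (simp add: field_simps)
  also have "\<dots> \<le> 48 / (\<omega> * \<gamma> * \<kappa>) * R0 * \<zeta>"
    using zeta_ge \<open>0 < \<omega> * \<gamma> * \<kappa>\<close> R0_pos unfolding \<kappa>_def
    by (intro mult_left_mono) auto
  finally have "B / (\<zeta> * (real K - 1)) \<le> 48 / (\<omega> * \<gamma> * \<kappa>) * R0 * \<zeta> / (\<zeta> * (real K - 1))"
    using zeta_pos K_ge by (intro divide_right_mono) auto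
  thus ?thesis
    unfolding \<kappa>_def using zeta_pos K_ge by (simp add: of_nat_diff)
qed

lemma min_grad_mean_le:
  "Min (grad_mean ` {..K - 1}) \<le> ennreal (48 / (\<omega> * \<gamma> * (1 - L * (\<gamma> + 4 * \<omega>))) * R0 / (real K - 1))"
proof -
  have "ennreal \<zeta> * (\<Sum>j<K - 1. grad_mean j) \<le> ennreal B"
    using epsilon_nonneg eta_nonneg R0_pos B_nonneg
    by (intro ennreal_perturbed_descent_sum_le[OF lyapunov_mean_Suc_le lyapunov_mean_0_le _ _ _ _ budget_le])
      auto
  hence "Min (grad_mean ` {..K - 1}) \<le> ennreal (B / (\<zeta> * real (K - 1)))"
    using zeta_pos K_ge B_nonneg by (intro Min_image_le_of_sum_le) auto
  also have "\<dots> \<le> ennreal (48 / (\<omega> * \<gamma> * (1 - L * (\<gamma> + 4 * \<omega>))) * R0 / (real K - 1))"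
    using B_div_le by (rule ennreal_leI)
  finally show ?thesis .
qed

end

theorem theorem4p5:
  fixes Fs :: "'n::finite \<Rightarrow> real^'d \<Rightarrow> real^'d"
    and xstar x0 :: "real^'d" and D :: "(real^'n) measure"
    and L \<rho> \<delta> \<gamma> \<omega> :: real and K \<tau> :: nat
  assumes meas: "\<forall>i. Fs i \<in> borel_measurable borel"
    and root: "Fbar Fs xstar = 0"
    and lip: "L-lipschitz_on UNIV (Fbar Fs)"
    and minty: "\<forall>x. inner (Fbar Fs x) (x - xstar) \<ge> - \<rho> * (norm (Fbar Fs x))\<^sup>2"
    and rho_pos: "0 < \<rho>" and rho_lt: "\<rho> < 1 / (2 * L)"
    and D_prob: "prob_space D" and D_sets: "sets D = sets borel"
    and D_nonneg: "AE v in D. \<forall>i. 0 \<le> v $ i"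
    and D_mean: "\<forall>i. integrable D (\<lambda>v. v $ i) \<and> (\<integral>v. v $ i \<partial>D) = 1"
    and delta_pos: "0 < \<delta>"
    and ER: "\<forall>x. (\<integral>\<^sup>+v. ennreal ((norm ((Fv Fs v x - Fv Fs v xstar) - (Fbar Fs x - Fbar Fs xstar)))\<^sup>2) \<partial>D)
                 \<le> ennreal (\<delta> / 2 * (norm (x - xstar))\<^sup>2)"
    and sigma_fin: "integrable D (\<lambda>v. (norm (Fv Fs v xstar))\<^sup>2)"
    and gamma_lo: "max (2 * \<rho>) (1 / (2 * L)) < \<gamma>" and gamma_hi: "\<gamma> < 1 / L"
    and omega_pos: "0 < \<omega>" and omega_hi: "\<omega> < min (\<gamma> - 2 * \<rho>) (1 / (4 * L) - \<gamma> / 4)"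
    and x0_ne: "x0 \<noteq> xstar"
    and K_ge: "2 \<le> K"
    and tau_ge: "real \<tau> \<ge> max 1 (max (32 * \<delta> / ((1 - L * \<gamma>) * L ^ 3 * \<omega>))
                  (max (48 * \<omega> * \<gamma> * \<delta> * (real K - 1) / (1 - L * \<gamma>)\<^sup>2)
                       (2 * \<omega> * \<gamma> * (\<integral>v. (norm (Fv Fs v xstar))\<^sup>2 \<partial>D) * (real K - 1)
                          / ((1 - L * \<gamma>) * (norm (x0 - xstar))\<^sup>2))))"
  shows "Min ((\<lambda>k. \<integral>\<^sup>+s. ennreal ((norm (Fbar Fs (snd (speg Fs \<tau> \<gamma> \<omega> x0 s k))))\<^sup>2)
                   \<partial>(PiM (UNIV :: (nat \<times> nat) set) (\<lambda>_. D))) ` {..K - 1})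
         \<le> ennreal ((48 / (\<omega> * \<gamma> * (1 - L * (\<gamma> + 4 * \<omega>)))) * (norm (x0 - xstar))\<^sup>2 / (real K - 1))"
proof -
  have steps: "2 * \<rho> < \<gamma>" "1 / (2 * L) < \<gamma>" "\<omega> < \<gamma> - 2 * \<rho>" "\<omega> < 1 / (4 * L) - \<gamma> / 4"
    using gamma_lo omega_hi by simp_all
  have batch: "1 \<le> real \<tau>" "32 * \<delta> / ((1 - L * \<gamma>) * L ^ 3 * \<omega>) \<le> real \<tau>"
    "48 * \<omega> * \<gamma> * \<delta> * (real K - 1) / (1 - L * \<gamma>)\<^sup>2 \<le> real \<tau>"
    "2 * \<omega> * \<gamma> * (\<integral>v. (norm (Fv Fs v xstar))\<^sup>2 \<partial>D) * (real K - 1)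
       / ((1 - L * \<gamma>) * (norm (x0 - xstar))\<^sup>2) \<le> real \<tau>"
    using tau_ge by simp_all
  interpret speg_setting Fs D xstar \<delta> L \<rho> \<gamma> \<omega> \<tau> K x0
    by (intro speg_setting.intro expected_residual.intro unbiased_sampling.intro
        expected_residual_axioms.intro speg_setting_axioms.intro)
      (fact meas[rule_format] D_prob D_sets D_mean[rule_format, THEN conjunct1]
        D_mean[rule_format, THEN conjunct2] root ER[rule_format] sigma_fin less_imp_le[OF delta_pos]
        lip minty[rule_format] rho_pos rho_lt gamma_hi omega_pos x0_ne K_ge steps batch)+
  show ?thesis
    using min_grad_mean_le unfolding grad_mean_def R0_def .
qed

end
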